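(* Let $\mathbb{K}$ be a valued field, $E$, $F$, $H$ topological $\mathbb{K}$-vector spaces, $U\subseteq E$ and $V\subseteq F$ subsets with dense interior, $k\in\mathbb{N}_0$, $\sigma\in\,]0,1]$, $\tau>0$, $f\colon U\to V$ a $C^{k,\sigma}_{BGN}$-map (as a map into $F$) and $g\colon V\to H$ a $C^{k,\tau}_{BGN}$-map. Then $g\circ f\colon U\to H$ is $C^{k,\sigma\cdot\tau}_{BGN}$.
   Context: Valued field: field with absolute value defining a non-discrete topology; vector spaces Hausdorff. $C^k_{BGN}$: for $W\subseteq E$ with dense interior, $W^{[1]}=\{(x,y,t)\in W\times E\times\mathbb{K}:x+ty\in W\}$, $W^{]1[}$ its subset with $t\ne0$, $g^{]1[}(x,y,t)=(g(x+ty)-g(x))/t$; $g$ is $C^0_{BGN}$ if continuous, $C^1_{BGN}$ if continuous and $g^{]1[}$ extends continuously to $g^{[1]}$ on $W^{[1]}$, $C^k_{BGN}$ if $C^1_{BGN}$ with $g^{[1]}$ $C^{k-1}_{BGN}$; $g^{[k]}=(g^{[1]})^{[k-1]}$, $g^{[0]}=g$. Gauge: $q\colon E\to[0,\infty[$ with $q(tx)=|t|q(x)$ and each $\{q<r\}$ a $0$-neighbourhood. $g\colon W\to F$ is $C^{0,\sigma}$ if for every $x_0\in W$ and gauge $q$ on $F$ there exist a gauge $p$ on $E$ and a neighbourhood $W_0$ of $x_0$ in $W$ with $q(g(y)-g(x))\le p(y-x)^\sigma$ for $x,y\in W_0$. $C^{k,\sigma}_{BGN}$: $C^k_{BGN}$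 and each $g^{[j]}$, $j\le k$, is $C^{0,\sigma}$. *)

theory Defs
  imports "HOL-Analysis.Analysis"
begin

definition valued_field :: "('k::{field,topological_space} \<Rightarrow> real) \<Rightarrow> bool" where
  "valued_field abv \<longleftrightarrow>
     (\<forall>x. 0 \<le> abv x) \<and> (\<forall>x. abv x = 0 \<longleftrightarrow> x = 0) \<and>
     (\<forall>x y. abv (x * y) = abv x * abv y) \<and> (\<forall>x y. abv (x + y) \<le> abv x + abv y) \<and>
     (\<forall>S::'k set. open S \<longleftrightarrow> (\<forall>x\<in>S. \<exists>e>0. \<forall>y. abv (y - x) < e \<longrightarrow> y \<in> S)) \<and>
     \<not> (\<forall>x::'k. open {x})"

definition tvs :: "('k::{field,topological_space} \<Rightarrow> 'e::{ab_group_add,t2_space} \<Rightarrow> 'e) \<Rightarrow> bool" where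
  "tvs sc \<longleftrightarrow> vector_space sc \<and>
     continuous_on UNIV (\<lambda>(x::'e, y). x + y) \<and>
     continuous_on UNIV (\<lambda>(t::'k, x::'e). sc t x)"

definition gauge :: "('k \<Rightarrow> real) \<Rightarrow> ('k \<Rightarrow> 'f::{ab_group_add,topological_space} \<Rightarrow> 'f)
    \<Rightarrow> ('f \<Rightarrow> real) \<Rightarrow> bool" where
  "gauge abv sc q \<longleftrightarrow> (\<forall>x. 0 \<le> q x) \<and> (\<forall>t x. q (sc t x) = abv t * q x) \<and>
     (\<forall>r>0. \<exists>N. open N \<and> 0 \<in> N \<and> N \<subseteq> {x. q x < r})"

text \<open>E^[j] = E^[j-1] x E^[j-1] x K is represented by a pair of coordinate functions:
the E-coordinates are indexed by boolean lists of length j (the path of x/y-choices),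
the K-coordinates by boolean lists of length < j (the node where the scalar t sits).
All other coordinates are 0. The topology is the product topology, the linear
structure is componentwise; this is isomorphic (as topological vector space) to the
iterated product.\<close>
type_synonym ('e,'k) code = "(bool list \<Rightarrow> 'e) \<times> (bool list \<Rightarrow> 'k)"

definition shape :: "nat \<Rightarrow> ('e::zero,'k::zero) code set" where
  "shape j = {(a,b). (\<forall>p. length p \<noteq> j \<longrightarrow> a p = 0) \<and> (\<forall>p. \<not> length p < j \<longrightarrow> b p = 0)}"

definition cadd :: "('e::plus,'k::plus) code \<Rightarrow> ('e,'k) code \<Rightarrow> ('e,'k) code" where
  "cadd x y = (\<lambda>p. fst x p + fst y p, \<lambda>p. snd x p + snd y p)"

definition cdiff :: "('e::minus,'k::minus) code \<Rightarrow> ('e,'k) code \<Rightarrow> ('e,'k) code" where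
  "cdiff x y = (\<lambda>p. fst x p - fst y p, \<lambda>p. snd x p - snd y p)"

definition cscale :: "('k::times \<Rightarrow> 'e \<Rightarrow> 'e) \<Rightarrow> 'k \<Rightarrow> ('e,'k) code \<Rightarrow> ('e,'k) code" where
  "cscale sc t x = (\<lambda>p. sc t (fst x p), \<lambda>p. t * snd x p)"

text \<open>The triple (x,y,t) in E^[j] x E^[j] x K, as an element of E^[j+1].\<close>
definition join :: "('e::zero,'k) code \<Rightarrow> ('e,'k) code \<Rightarrow> 'k \<Rightarrow> ('e,'k) code" where
  "join x y t =
     (\<lambda>p. case p of [] \<Rightarrow> 0 | False # q \<Rightarrow> fst x q | True # q \<Rightarrow> fst y q,
      \<lambda>p. case p of [] \<Rightarrow> t | False # q \<Rightarrow> snd x q | True # q \<Rightarrow> snd y q)"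

definition W1 :: "('k::field \<Rightarrow> 'e::ab_group_add \<Rightarrow> 'e) \<Rightarrow> nat \<Rightarrow> ('e,'k) code set \<Rightarrow> ('e,'k) code set" where
  "W1 sc j W = {join x y t | x y t. x \<in> W \<and> y \<in> shape j \<and> cadd x (cscale sc t y) \<in> W}"

definition code_gauge :: "('k::{field,topological_space} \<Rightarrow> real) \<Rightarrow> ('k \<Rightarrow> 'e::{ab_group_add,topological_space} \<Rightarrow> 'e)
    \<Rightarrow> nat \<Rightarrow> (('e,'k) code \<Rightarrow> real) \<Rightarrow> bool" where
  "code_gauge abv sc j p \<longleftrightarrow> (\<forall>x\<in>shape j. 0 \<le> p x) \<and>
     (\<forall>t. \<forall>x\<in>shape j. p (cscale sc t x) = abv t * p x) \<and>
     (\<forall>r>0. \<exists>N. open N \<and> (\<lambda>_. 0, \<lambda>_. 0) \<in> N \<and> shape j \<inter> N \<subseteq> {x. p x < r})"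

definition holder_code :: "('k::{field,topological_space} \<Rightarrow> real) \<Rightarrow> ('k \<Rightarrow> 'e::{ab_group_add,topological_space} \<Rightarrow> 'e)
    \<Rightarrow> ('k \<Rightarrow> 'f::{ab_group_add,topological_space} \<Rightarrow> 'f) \<Rightarrow> real \<Rightarrow> nat
    \<Rightarrow> ('e,'k) code set \<Rightarrow> (('e,'k) code \<Rightarrow> 'f) \<Rightarrow> bool" where
  "holder_code abv scE scF \<sigma> j W G \<longleftrightarrow>
     (\<forall>x0\<in>W. \<forall>q. gauge abv scF q \<longrightarrow>
        (\<exists>p. code_gauge abv scE j p \<and>
           (\<exists>N. open N \<and> x0 \<in> N \<and>
              (\<forall>x\<in>W \<inter> N. \<forall>y\<in>W \<inter> N. q (G y - G x) \<le> p (cdiff y x) powr \<sigma>))))"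

text \<open>BGN k j W G: the map G : W \<rightarrow> F (W \<subseteq> E^[j]) is C^{k,\<sigma>}_BGN; the existentially
quantified G1 is the continuous extension G^[1] of the difference quotient G^]1[.\<close>
fun BGN :: "('k::{field,topological_space} \<Rightarrow> real) \<Rightarrow> ('k \<Rightarrow> 'e::{ab_group_add,topological_space} \<Rightarrow> 'e)
    \<Rightarrow> ('k \<Rightarrow> 'f::{ab_group_add,topological_space} \<Rightarrow> 'f) \<Rightarrow> real \<Rightarrow> nat \<Rightarrow> nat
    \<Rightarrow> ('e,'k) code set \<Rightarrow> (('e,'k) code \<Rightarrow> 'f) \<Rightarrow> bool" where
  "BGN abv scE scF \<sigma> 0 j W G \<longleftrightarrow>
     continuous_on W G \<and> holder_code abv scE scF \<sigma> j W G"
| "BGN abv scE scF \<sigma> (Suc k) j W G \<longleftrightarrow>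
     continuous_on W G \<and> holder_code abv scE scF \<sigma> j W G \<and>
     (\<exists>G1. continuous_on (W1 scE j W) G1 \<and>
        (\<forall>x y t. x \<in> W \<longrightarrow> y \<in> shape j \<longrightarrow> t \<noteq> 0 \<longrightarrow> cadd x (cscale scE t y) \<in> W \<longrightarrow>
           G1 (join x y t) = scF (inverse t) (G (cadd x (cscale scE t y)) - G x)) \<and>
        BGN abv scE scF \<sigma> k (Suc j) (W1 scE j W) G1)"

definition lift0 :: "'e::zero \<Rightarrow> ('e,'k::zero) code" where
  "lift0 x = (\<lambda>p. if p = [] then x else 0, \<lambda>p. 0)"

definition Ck_sigma_BGN :: "('k::{field,topological_space} \<Rightarrow> real) \<Rightarrow> ('k \<Rightarrow> 'e::{ab_group_add,topological_space} \<Rightarrow> 'e)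
    \<Rightarrow> ('k \<Rightarrow> 'f::{ab_group_add,topological_space} \<Rightarrow> 'f) \<Rightarrow> nat \<Rightarrow> real \<Rightarrow> 'e set \<Rightarrow> ('e \<Rightarrow> 'f) \<Rightarrow> bool" where
  "Ck_sigma_BGN abv scE scF k \<sigma> W g \<longleftrightarrow>
     BGN abv scE scF \<sigma> k 0 ((lift0 :: 'e \<Rightarrow> ('e,'k) code) ` W) (\<lambda>c. g (fst c []))"

end

theory Submission
  imports Defs "HOL-Library.Function_Algebras"
begin

text \<open>The statement is proved for maps between the coordinate spaces E^[j], by induction on k
  and simultaneously for all levels j. On level 0 continuity is preserved by composition and the
  Hoelder exponents multiply: \<open>q (\<Psi> (\<Phi> y) - \<Psi> (\<Phi> x)) \<le> p (\<Phi> y - \<Phi> x)^\<tau> \<le> p' (y - x)^(\<sigma>\<tau>)\<close>.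
  For the induction step, the chain rule \<open>(\<Psi> \<circ> \<Phi>)^[1] (x, y, t) = \<Psi>^[1] (\<Phi> x, \<Phi>^[1] (x, y, t), t)\<close>
  writes the extended difference quotient of the composite as \<open>\<Psi>^[1]\<close> composed with the map
  \<open>(x, y, t) \<mapsto> (\<Phi> x, \<Phi>^[1] (x, y, t), t)\<close>. That map is of class C^{k,\<sigma>}, because the class is
  stable under composition with continuous linear maps on either side and under joining three
  components, and contains the continuous linear functionals (for \<open>\<sigma> \<le> 1\<close>).
  A gauge need not satisfy the triangle inequality, so joining Hoelder maps rests on a
  replacement: for every gauge q there is a gauge q' with \<open>q (u + v + w) \<le> max (q' u) (q' v) (q' w)\<close>,
  namely the Minkowski functional of a balanced neighbourhood B of 0 with \<open>B + B + B \<subseteq> {q < 1}\<close>.\<close>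

section \<open>Valued fields\<close>

context
  fixes abv :: "'k::{field,topological_space} \<Rightarrow> real"
  assumes vf: "valued_field abv"
begin

lemma valued_fieldD:
  shows abv_nonneg: "0 \<le> abv x"
    and abv_eq_0_iff: "abv x = 0 \<longleftrightarrow> x = 0"
    and abv_mult: "abv (x * y) = abv x * abv y"
    and abv_add_le: "abv (x + y) \<le> abv x + abv y"
    and open_abv_iff: "open S \<longleftrightarrow> (\<forall>x\<in>S. \<exists>e>0. \<forall>y. abv (y - x) < e \<longrightarrow> y \<in> S)"
    and not_discrete: "\<not> (\<forall>x::'k. open {x})"
  using vf unfolding valued_field_def by auto

lemma abv_0 [simp]: "abv 0 = 0"
  by (simp add: abv_eq_0_iff)

lemma abv_1: "abv 1 = 1"
  using abv_mult[of 1 1] abv_eq_0_iff[of 1] by simp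

lemma abv_minus: "abv (- x) = abv x"
proof -
  have "abv (-1) * abv (-1) = 1"
    using abv_mult[of "-1" "-1"] abv_1 by simp
  moreover have "(abv (-1) - 1) * (abv (-1) + 1) = abv (-1) * abv (-1) - 1"
    by (simp add: algebra_simps)
  ultimately have "abv (-1) = 1"
    using abv_nonneg[of "-1"] by simp
  then show ?thesis
    using abv_mult[of "-1" x] by simp
qed

lemma abv_minus_commute: "abv (x - y) = abv (y - x)"
  using abv_minus[of "y - x"] by simp

lemma abv_inverse: "abv (inverse t) = inverse (abv t)"
proof (cases "t = 0")
  case False
  then have "abv (inverse t) * abv t = 1"
    using abv_mult[of "inverse t" t] abv_1 by simp
  then show ?thesis by (metis inverse_unique mult.commute)
qed simp

lemma abv_diff_triangle: "abv (x - z) \<le> abv (x - y) + abv (y - z)"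
  using abv_add_le[of "x - y" "y - z"] by simp

text \<open>Non-discreteness of the topology is exactly what provides arbitrarily small non-zero scalars.\<close>
lemma exists_nonzero_abv_less:
  assumes "e > 0"
  obtains t where "t \<noteq> 0" "abv t < e"
proof -
  obtain x :: 'k where "\<not> open {x}"
    using not_discrete by blast
  then obtain y where "abv (y - x) < e" "y \<noteq> x"
    using assms open_abv_iff[of "{x}"] by auto
  then show thesis
    using that[of "y - x"] by simp
qed

lemma open_abv_ball: "open {y. abv (y - a) < e}"
  unfolding open_abv_iff
proof (intro ballI exI conjI allI impI)
  fix x assume "x \<in> {y. abv (y - a) < e}"
  then show "0 < e - abv (x - a)" by simp
  fix y assume "abv (y - x) < e - abv (x - a)"
  then show "y \<in> {y. abv (y - a) < e}"
    using abv_diff_triangle[of y a x] by simp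
qed

lemma continuous_on_UNIV_abvI:
  fixes f :: "'a::topological_space \<Rightarrow> 'k"
  assumes "\<And>x e. e > 0 \<Longrightarrow> \<exists>A. open A \<and> x \<in> A \<and> (\<forall>y\<in>A. abv (f y - f x) < e)"
  shows "continuous_on UNIV f"
  unfolding continuous_on_open_vimage[OF open_UNIV]
proof (intro allI impI)
  fix B :: "'k set" assume "open B"
  show "open (f -` B \<inter> UNIV)"
  proof (rule open_subopen[THEN iffD2], intro ballI)
    fix x assume "x \<in> f -` B \<inter> UNIV"
    then obtain e where e: "e > 0" "\<forall>y. abv (y - f x) < e \<longrightarrow> y \<in> B"
      using \<open>open B\<close> open_abv_iff by blast
    obtain A where "open A" "x \<in> A" "\<forall>y\<in>A. abv (f y - f x) < e"
      using assms[OF e(1)] by blast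
    then show "\<exists>T. open T \<and> x \<in> T \<and> T \<subseteq> f -` B \<inter> UNIV"
      using e by (intro exI[of _ A]) auto
  qed
qed

lemma continuous_on_add_abv: "continuous_on UNIV (\<lambda>z::'k \<times> 'k. fst z + snd z)"
proof (rule continuous_on_UNIV_abvI)
  fix z :: "'k \<times> 'k" and e :: real assume "e > 0"
  obtain a b where z: "z = (a, b)" by (cases z)
  let ?A = "{x. abv (x - a) < e/2} \<times> {y. abv (y - b) < e/2}"
  have "\<forall>w\<in>?A. abv ((fst w + snd w) - (fst z + snd z)) < e"
  proof
    fix w assume "w \<in> ?A"
    moreover have "abv ((fst w - a) + (snd w - b)) \<le> abv (fst w - a) + abv (snd w - b)"
      by (rule abv_add_le)
    ultimately show "abv ((fst w + snd w) - (fst z + snd z)) < e"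
      using z by (auto simp: algebra_simps mem_Times_iff)
  qed
  moreover have "open ?A" by (intro open_Times open_abv_ball)
  moreover have "z \<in> ?A" using z \<open>e > 0\<close> by simp
  ultimately show "\<exists>A. open A \<and> z \<in> A \<and> (\<forall>w\<in>A. abv ((fst w + snd w) - (fst z + snd z)) < e)"
    by blast
qed

lemma continuous_on_mult_abv: "continuous_on UNIV (\<lambda>z::'k \<times> 'k. fst z * snd z)"
proof (rule continuous_on_UNIV_abvI)
  fix z :: "'k \<times> 'k" and e :: real assume "e > 0"
  obtain a b where z: "z = (a, b)" by (cases z)
  define d where "d = min 1 (e / (2 * (abv a + abv b + 1)))"
  have ab: "abv a \<ge> 0" "abv b \<ge> 0" by (rule abv_nonneg)+
  have d: "0 < d" "d \<le> 1" unfolding d_def using \<open>e > 0\<close> ab by auto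
  have "d * (abv a + abv b + 1) \<le> e / (2 * (abv a + abv b + 1)) * (abv a + abv b + 1)"
    unfolding d_def using ab by (intro mult_right_mono) auto
  also have "\<dots> = e / 2" using ab by (simp add: field_simps)
  also have "\<dots> < e" using \<open>e > 0\<close> by simp
  finally have de: "d * (abv a + abv b + 1) < e" .
  let ?A = "{x. abv (x - a) < d} \<times> {y. abv (y - b) < d}"
  have "\<forall>w\<in>?A. abv (fst w * snd w - fst z * snd z) < e"
  proof
    fix w assume "w \<in> ?A"
    then obtain x y where w: "w = (x, y)" "abv (x - a) < d" "abv (y - b) < d" by auto
    have "abv x \<le> abv (x - a) + abv a"
      using abv_add_le[of "x - a" a] by simp
    then have x: "abv x \<le> abv a + d" using w by simp
    have eq: "x * y - a * b = x * (y - b) + (x - a) * b" by (simp add: algebra_simps)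
    have "abv (x * y - a * b) \<le> abv x * abv (y - b) + abv (x - a) * abv b"
      using abv_add_le[of "x * (y - b)" "(x - a) * b"] unfolding eq abv_mult .
    also have "\<dots> \<le> (abv a + d) * d + d * abv b"
      using x w ab d abv_nonneg by (intro add_mono mult_mono) auto
    also have "\<dots> \<le> d * (abv a + abv b + 1)" using d by (simp add: algebra_simps)
    finally show "abv (fst w * snd w - fst z * snd z) < e" using w z de by simp
  qed
  moreover have "open ?A" by (intro open_Times open_abv_ball)
  moreover have "z \<in> ?A" using z d by simp
  ultimately show "\<exists>A. open A \<and> z \<in> A \<and> (\<forall>w\<in>A. abv (fst w * snd w - fst z * snd z) < e)"
    by blast
qed

end

lemma vector_space_scale_simps:
  assumes "vector_space sc"
  shows "sc t 0 = 0" "sc 0 x = 0" "sc t (x + y) = sc t x + sc t y" "sc t (x - y) = sc t x - sc t y"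
    "sc a (sc b x) = sc (a * b) x" "sc 1 x = x" "sc t (- x) = - sc t x" "sc (a + b) x = sc a x + sc b x"
proof -
  interpret vector_space sc by fact
  show "sc t 0 = 0" "sc 0 x = 0" "sc t (x + y) = sc t x + sc t y" "sc t (x - y) = sc t x - sc t y"
    "sc a (sc b x) = sc (a * b) x" "sc 1 x = x" "sc t (- x) = - sc t x" "sc (a + b) x = sc a x + sc b x"
    by (simp_all add: scale_right_diff_distrib scale_right_distrib scale_left_distrib)
qed

lemma tvs_vector_space: "tvs sc \<Longrightarrow> vector_space sc"
  unfolding tvs_def by simp

lemma tvs_continuous_add:
  "tvs (sc :: 'k::{field,topological_space} \<Rightarrow> 'e::{ab_group_add,t2_space} \<Rightarrow> 'e) \<Longrightarrow>
    continuous_on UNIV (\<lambda>z::'e \<times> 'e. fst z + snd z)"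
  unfolding tvs_def by (simp add: case_prod_unfold)

lemma tvs_continuous_scale:
  "tvs (sc :: 'k::{field,topological_space} \<Rightarrow> 'e::{ab_group_add,t2_space} \<Rightarrow> 'e) \<Longrightarrow>
    continuous_on UNIV (\<lambda>z::'k \<times> 'e. sc (fst z) (snd z))"
  unfolding tvs_def by (simp add: case_prod_unfold)

lemma continuous_on_scale_right:
  assumes "continuous_on UNIV (\<lambda>z::'k::topological_space \<times> 'x::topological_space. sc (fst z) (snd z))"
  shows "continuous_on UNIV (sc t)"
  using continuous_on_compose2[OF assms continuous_on_Pair[OF continuous_on_const continuous_on_id]]
  by simp

lemma continuous_on_scale_left:
  assumes "continuous_on UNIV (\<lambda>z::'k::topological_space \<times> 'x::topological_space. sc (fst z) (snd z))"
  shows "continuous_on UNIV (\<lambda>s. sc s x)"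
  using continuous_on_compose2[OF assms continuous_on_Pair[OF continuous_on_id continuous_on_const]]
  by simp

lemma open_vimage_continuous_on_UNIV: "continuous_on UNIV f \<Longrightarrow> open S \<Longrightarrow> open (f -` S)"
  using continuous_on_open_vimage[OF open_UNIV, of f] by auto

text \<open>Unlike \<^const>\<open>Vector_Spaces.linear\<close>, no vector space axioms are imposed on the two scalar actions.\<close>
definition linear_map :: "('k \<Rightarrow> 'a::plus \<Rightarrow> 'a) \<Rightarrow> ('k \<Rightarrow> 'b::plus \<Rightarrow> 'b) \<Rightarrow> ('a \<Rightarrow> 'b) \<Rightarrow> bool" where
  "linear_map scA scB L \<longleftrightarrow> (\<forall>x y. L (x + y) = L x + L y) \<and> (\<forall>t x. L (scA t x) = scB t (L x))"

lemma linear_map_add: "linear_map scA scB L \<Longrightarrow> L (x + y) = L x + L y"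
  unfolding linear_map_def by simp

lemma linear_map_scale: "linear_map scA scB L \<Longrightarrow> L (scA t x) = scB t (L x)"
  unfolding linear_map_def by simp

lemma linear_map_0: "linear_map scA scB (L :: 'a::ab_group_add \<Rightarrow> 'b::ab_group_add) \<Longrightarrow> L 0 = 0"
  using linear_map_add[of scA scB L 0 0] by simp

lemma linear_map_diff:
  "linear_map scA scB (L :: 'a::ab_group_add \<Rightarrow> 'b::ab_group_add) \<Longrightarrow> L (x - y) = L x - L y"
  using linear_map_add[of scA scB L "x - y" y] by (simp add: algebra_simps)

lemma linear_map_compose: "linear_map scA scB L \<Longrightarrow> linear_map scB scC M \<Longrightarrow> linear_map scA scC (\<lambda>x. M (L x))"
  unfolding linear_map_def by simp

section \<open>The coordinate spaces E^[j]\<close>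

lemma code_eqI: "(\<And>p. fst a p = fst b p) \<Longrightarrow> (\<And>p. snd a p = snd b p) \<Longrightarrow> a = (b :: ('e,'k) code)"
  by (simp add: prod_eq_iff fun_eq_iff)

lemma code_list_cases: "P [] \<Longrightarrow> (\<And>q. P (False # q)) \<Longrightarrow> (\<And>q. P (True # q)) \<Longrightarrow> P p"
  by (metis (full_types) list.exhaust)

lemma cadd_eq: "cadd x y = x + y"
  unfolding cadd_def by (rule code_eqI) auto

lemma cdiff_eq: "cdiff x y = x - y"
  unfolding cdiff_def by (rule code_eqI) auto

lemma code_zero_eq: "((\<lambda>_. 0, \<lambda>_. 0) :: ('e::zero,'k::zero) code) = 0"
  by (rule code_eqI) auto

lemma cscale_apply [simp]: "fst (cscale sc t x) p = sc t (fst x p)" "snd (cscale sc t x) p = t * snd x p"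
  unfolding cscale_def by auto

lemma code_apply [simp]:
  "fst (x + y) p = fst x p + fst y p" "snd (x + y) p = snd x p + snd y p"
  "fst (x - y) p = fst x p - fst y p" "snd (x - y) p = snd x p - snd y p"
  "fst (0 :: ('e::zero,'k::zero) code) p = 0" "snd (0 :: ('e::zero,'k::zero) code) p = 0"
  "fst (- x) p = - fst x p" "snd (- x) p = - snd x p"
  by auto

lemma vector_space_cscale: "vector_space sc \<Longrightarrow> vector_space (cscale sc)"
  unfolding vector_space_def module_def
  using vector_space_scale_simps[of sc] by (auto intro!: code_eqI simp: algebra_simps)

lemma cscale_0_right: "vector_space sc \<Longrightarrow> cscale sc t 0 = 0"
  by (rule code_eqI) (simp_all add: vector_space_scale_simps)

lemma cscale_0_left: "vector_space sc \<Longrightarrow> cscale sc 0 x = 0"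
  by (rule code_eqI) (simp_all add: vector_space_scale_simps)

lemma cscale_cscale_inverse: "vector_space sc \<Longrightarrow> t \<noteq> 0 \<Longrightarrow> cscale sc t (cscale sc (inverse t) x) = x"
  by (rule code_eqI) (simp_all add: vector_space_scale_simps)

definition cleft :: "('e,'k) code \<Rightarrow> ('e,'k) code" where
  "cleft z = (\<lambda>q. fst z (False # q), \<lambda>q. snd z (False # q))"

definition cright :: "('e,'k) code \<Rightarrow> ('e,'k) code" where
  "cright z = (\<lambda>q. fst z (True # q), \<lambda>q. snd z (True # q))"

definition cscalar :: "('e,'k) code \<Rightarrow> 'k" where
  "cscalar z = snd z []"

definition cproj :: "nat \<Rightarrow> ('e::zero,'k::zero) code \<Rightarrow> ('e,'k) code" where
  "cproj j z = (\<lambda>p. if length p = j then fst z p else 0, \<lambda>p. if length p < j then snd z p else 0)"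

lemma join_apply [simp]:
  "fst (join x y t) [] = 0" "snd (join x y t) [] = t"
  "fst (join x y t) (False # q) = fst x q" "snd (join x y t) (False # q) = snd x q"
  "fst (join x y t) (True # q) = fst y q" "snd (join x y t) (True # q) = snd y q"
  unfolding join_def by auto

lemma cleft_apply [simp]: "fst (cleft z) q = fst z (False # q)" "snd (cleft z) q = snd z (False # q)"
  unfolding cleft_def by auto

lemma cright_apply [simp]: "fst (cright z) q = fst z (True # q)" "snd (cright z) q = snd z (True # q)"
  unfolding cright_def by auto

lemma cproj_apply [simp]:
  "fst (cproj j z) p = (if length p = j then fst z p else 0)"
  "snd (cproj j z) p = (if length p < j then snd z p else 0)"
  unfolding cproj_def by auto

lemma cleft_join [simp]: "cleft (join x y t) = x"
  by (rule code_eqI) auto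

lemma cright_join [simp]: "cright (join x y t) = y"
  by (rule code_eqI) auto

lemma cscalar_join [simp]: "cscalar (join x y t) = t"
  by (simp add: cscalar_def)

lemma join_diff: "join (x - x') (y - y') (t - t') = (join x y t - join x' y' (t' :: 'k::ring) :: ('e::ab_group_add,'k) code)"
  by (rule code_eqI; rule code_list_cases; simp)

lemma join_add: "join (x + x') (y + y') (t + t') = (join x y t + join x' y' (t' :: 'k::ring) :: ('e::ab_group_add,'k) code)"
  by (rule code_eqI; rule code_list_cases; simp)

lemma cscale_join: "vector_space sc \<Longrightarrow> cscale sc s (join x y t) = join (cscale sc s x) (cscale sc s y) (s * t)"
  by (rule code_eqI; rule code_list_cases; simp add: vector_space_scale_simps)

lemma shape_iff: "z \<in> shape j \<longleftrightarrow> (\<forall>p. length p \<noteq> j \<longrightarrow> fst z p = 0) \<and> (\<forall>p. \<not> length p < j \<longrightarrow> snd z p = 0)"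
  unfolding shape_def by (cases z) auto

lemma shape_diff: "(x :: ('e::ab_group_add,'k::ab_group_add) code) \<in> shape j \<Longrightarrow> y \<in> shape j \<Longrightarrow> x - y \<in> shape j"
  by (simp add: shape_iff)

lemma shape_cscale: "vector_space sc \<Longrightarrow> x \<in> shape j \<Longrightarrow> cscale sc t x \<in> shape j"
  by (simp add: shape_iff vector_space_scale_simps)

lemma cproj_in_shape: "cproj j z \<in> shape j"
  by (simp add: shape_iff)

lemma cproj_id: "z \<in> shape j \<Longrightarrow> cproj j z = z"
  by (rule code_eqI) (auto simp: shape_iff)

lemma join_in_shape:
  assumes "x \<in> shape j" "y \<in> shape j"
  shows "join x y t \<in> shape (Suc j)"
  unfolding shape_iff
proof (intro conjI allI)
  fix p
  show "length p \<noteq> Suc j \<longrightarrow> fst (join x y t) p = 0"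
    by (rule code_list_cases[of _ p]) (use assms in \<open>auto simp: shape_iff\<close>)
  show "\<not> length p < Suc j \<longrightarrow> snd (join x y t) p = 0"
    by (rule code_list_cases[of _ p]) (use assms in \<open>auto simp: shape_iff\<close>)
qed

lemma cleft_in_shape: "z \<in> shape (Suc j) \<Longrightarrow> cleft z \<in> shape j"
  by (simp add: shape_iff)

lemma cright_in_shape: "z \<in> shape (Suc j) \<Longrightarrow> cright z \<in> shape j"
  by (simp add: shape_iff)

lemma lift0_in_shape: "lift0 x \<in> shape 0"
  by (simp add: shape_iff lift0_def)

lemma lift0_apply_Nil: "fst (lift0 u :: ('e::zero,'k::zero) code) [] = u"
  by (simp add: lift0_def)

lemma W1_iff: "z \<in> W1 sc j W \<longleftrightarrow> (\<exists>x y t. z = join x y t \<and> x \<in> W \<and> y \<in> shape j \<and> x + cscale sc t y \<in> W)"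
  unfolding W1_def cadd_eq by (rule mem_Collect_eq)

lemma join_in_W1: "x \<in> W \<Longrightarrow> y \<in> shape j \<Longrightarrow> x + cscale sc t y \<in> W \<Longrightarrow> join x y t \<in> W1 sc j W"
  unfolding W1_iff by blast

lemma W1_subset_shape: "W \<subseteq> shape j \<Longrightarrow> W1 sc j W \<subseteq> shape (Suc j)"
  unfolding W1_def by (auto intro!: join_in_shape)

lemma cleft_W1: "cleft ` W1 sc j W \<subseteq> W"
proof (rule image_subsetI)
  fix z assume "z \<in> W1 sc j W"
  then obtain x y t where "z = join x y t" "x \<in> W"
    unfolding W1_iff by blast
  then show "cleft z \<in> W" by simp
qed

lemma linear_map_cleft: "linear_map (cscale sc) (cscale sc) cleft"
  unfolding linear_map_def by (auto intro!: code_eqI)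

lemma linear_map_cright: "linear_map (cscale sc) (cscale sc) cright"
  unfolding linear_map_def by (auto intro!: code_eqI)

lemma linear_map_cscalar: "linear_map (cscale sc) (*) cscalar"
  unfolding linear_map_def cscalar_def by auto

lemma linear_map_cproj: "vector_space sc \<Longrightarrow> linear_map (cscale sc) (cscale sc) (cproj j)"
  unfolding linear_map_def by (auto intro!: code_eqI simp: vector_space_scale_simps)

lemma linear_map_lift0: "vector_space sc \<Longrightarrow> linear_map sc (cscale sc) lift0"
  unfolding linear_map_def lift0_def by (auto intro!: code_eqI simp: vector_space_scale_simps)

lemma linear_map_join_left: "vector_space sc \<Longrightarrow> linear_map (cscale sc) (cscale sc) (\<lambda>x. join x 0 0)"
  unfolding linear_map_def by (auto simp: cscale_join cscale_0_right join_add[symmetric])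

lemma linear_map_join_right: "vector_space sc \<Longrightarrow> linear_map (cscale sc) (cscale sc) (\<lambda>y. join 0 y 0)"
  unfolding linear_map_def by (auto simp: cscale_join cscale_0_right join_add[symmetric])

lemma linear_map_join_scalar: "vector_space sc \<Longrightarrow> linear_map (*) (cscale sc) (\<lambda>t. join 0 0 t)"
  unfolding linear_map_def by (auto simp: cscale_join cscale_0_right join_add[symmetric])

lemma continuous_on_code_fst: "continuous_on S Z \<Longrightarrow> continuous_on S (\<lambda>x. fst (Z x) p)"
  by (rule continuous_on_compose2[OF continuous_on_product_coordinates continuous_on_fst]) auto

lemma continuous_on_code_snd: "continuous_on S Z \<Longrightarrow> continuous_on S (\<lambda>x. snd (Z x) p)"
  by (rule continuous_on_compose2[OF continuous_on_product_coordinates continuous_on_snd]) auto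

lemma continuous_on_codeI:
  assumes "\<And>p. continuous_on S (\<lambda>x. fst (Z x) p)" "\<And>p. continuous_on S (\<lambda>x. snd (Z x) p)"
  shows "continuous_on S (Z :: _ \<Rightarrow> ('e::topological_space,'k::topological_space) code)"
proof -
  have "continuous_on S (\<lambda>x. (fst (Z x), snd (Z x)))"
    by (intro continuous_on_Pair continuous_on_coordinatewise_then_product assms)
  then show ?thesis by simp
qed

lemma continuous_on_join:
  assumes "continuous_on S a" "continuous_on S b" "continuous_on S c"
  shows "continuous_on S (\<lambda>x. join (a x) (b x) (c x) :: ('e::{zero,topological_space},'k::topological_space) code)"
proof (rule continuous_on_codeI)
  fix p
  show "continuous_on S (\<lambda>x. fst (join (a x) (b x) (c x)) p)"
    by (rule code_list_cases[of _ p]) (simp_all add: continuous_on_code_fst assms)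
  show "continuous_on S (\<lambda>x. snd (join (a x) (b x) (c x)) p)"
    by (rule code_list_cases[of _ p]) (simp_all add: continuous_on_code_snd assms)
qed

lemma continuous_on_cleft: "continuous_on UNIV (cleft :: ('e::topological_space,'k::topological_space) code \<Rightarrow> _)"
  by (rule continuous_on_codeI) (simp_all add: continuous_on_code_fst continuous_on_code_snd)

lemma continuous_on_cright: "continuous_on UNIV (cright :: ('e::topological_space,'k::topological_space) code \<Rightarrow> _)"
  by (rule continuous_on_codeI) (simp_all add: continuous_on_code_fst continuous_on_code_snd)

lemma continuous_on_cscalar: "continuous_on UNIV (cscalar :: ('e::topological_space,'k::topological_space) code \<Rightarrow> _)"
  unfolding cscalar_def by (simp add: continuous_on_code_snd)

lemma continuous_on_cproj:
  "continuous_on UNIV (cproj j :: ('e::{zero,topological_space},'k::{zero,topological_space}) code \<Rightarrow> _)"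
proof (rule continuous_on_codeI)
  fix p
  show "continuous_on UNIV (\<lambda>z::('e,'k) code. fst (cproj j z) p)"
    by (cases "length p = j") (simp_all add: continuous_on_code_fst)
  show "continuous_on UNIV (\<lambda>z::('e,'k) code. snd (cproj j z) p)"
    by (cases "length p < j") (simp_all add: continuous_on_code_snd)
qed

lemma continuous_on_lift0: "continuous_on UNIV (lift0 :: 'e::{zero,topological_space} \<Rightarrow> ('e,'k::{zero,topological_space}) code)"
proof (rule continuous_on_codeI)
  fix p
  show "continuous_on UNIV (\<lambda>x::'e. fst (lift0 x :: ('e,'k) code) p)"
    by (cases "p = []") (simp_all add: lift0_def)
qed (simp add: lift0_def)

lemma continuous_on_code_add:
  fixes abv :: "'k::{field,topological_space} \<Rightarrow> real" and sc :: "'k \<Rightarrow> 'f::{ab_group_add,t2_space} \<Rightarrow> 'f"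
  assumes vf: "valued_field abv" and "tvs sc"
  shows "continuous_on UNIV (\<lambda>z::('f,'k) code \<times> ('f,'k) code. fst z + snd z)"
proof (rule continuous_on_codeI)
  fix p
  have "continuous_on UNIV (\<lambda>z::('f,'k) code \<times> ('f,'k) code. (fst (fst z) p, fst (snd z) p))"
    by (intro continuous_on_Pair continuous_on_code_fst continuous_on_code_snd
        continuous_on_fst continuous_on_snd continuous_on_id)
  from continuous_on_compose2[OF tvs_continuous_add[OF \<open>tvs sc\<close>] this]
  show "continuous_on UNIV (\<lambda>z::('f,'k) code \<times> ('f,'k) code. fst (fst z + snd z) p)" by simp
  have "continuous_on UNIV (\<lambda>z::('f,'k) code \<times> ('f,'k) code. (snd (fst z) p, snd (snd z) p))"
    by (intro continuous_on_Pair continuous_on_code_fst continuous_on_code_snd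
        continuous_on_fst continuous_on_snd continuous_on_id)
  from continuous_on_compose2[OF continuous_on_add_abv[OF vf] this]
  show "continuous_on UNIV (\<lambda>z::('f,'k) code \<times> ('f,'k) code. snd (fst z + snd z) p)" by simp
qed

lemma continuous_on_cscale:
  fixes abv :: "'k::{field,topological_space} \<Rightarrow> real" and sc :: "'k \<Rightarrow> 'f::{ab_group_add,t2_space} \<Rightarrow> 'f"
  assumes vf: "valued_field abv" and "tvs sc"
  shows "continuous_on UNIV (\<lambda>z::'k \<times> ('f,'k) code. cscale sc (fst z) (snd z))"
proof (rule continuous_on_codeI)
  fix p
  have "continuous_on UNIV (\<lambda>z::'k \<times> ('f,'k) code. (fst z, fst (snd z) p))"
    by (intro continuous_on_Pair continuous_on_code_fst continuous_on_code_snd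
        continuous_on_fst continuous_on_snd continuous_on_id)
  from continuous_on_compose2[OF tvs_continuous_scale[OF \<open>tvs sc\<close>] this]
  show "continuous_on UNIV (\<lambda>z::'k \<times> ('f,'k) code. fst (cscale sc (fst z) (snd z)) p)" by simp
  have "continuous_on UNIV (\<lambda>z::'k \<times> ('f,'k) code. (fst z, snd (snd z) p))"
    by (intro continuous_on_Pair continuous_on_code_fst continuous_on_code_snd
        continuous_on_fst continuous_on_snd continuous_on_id)
  from continuous_on_compose2[OF continuous_on_mult_abv[OF vf] this]
  show "continuous_on UNIV (\<lambda>z::'k \<times> ('f,'k) code. snd (cscale sc (fst z) (snd z)) p)" by simp
qed

section \<open>Gauges\<close>

lemma code_gauge_nonneg: "code_gauge abv sc j p \<Longrightarrow> x \<in> shape j \<Longrightarrow> 0 \<le> p x"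
  unfolding code_gauge_def by blast

lemma gauge_linear_pullback:
  fixes L :: "'a::{ab_group_add,topological_space} \<Rightarrow> 'b::{ab_group_add,topological_space}"
  assumes q: "gauge abv scB q" and L: "linear_map scA scB L" "continuous_on UNIV L"
  shows "gauge abv scA (\<lambda>x. q (L x))"
  unfolding gauge_def
proof (intro conjI allI impI)
  fix x show "0 \<le> q (L x)"
    using q unfolding gauge_def by simp
next
  fix t x show "q (L (scA t x)) = abv t * q (L x)"
    using q unfolding gauge_def by (simp add: linear_map_scale[OF L(1)])
next
  fix r :: real assume "r > 0"
  then obtain N where N: "open N" "0 \<in> N" "N \<subseteq> {x. q x < r}"
    using q unfolding gauge_def by blast
  then show "\<exists>N. open N \<and> 0 \<in> N \<and> N \<subseteq> {x. q (L x) < r}"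
    using open_vimage_continuous_on_UNIV[OF L(2) N(1)] linear_map_0[OF L(1)]
    by (intro exI[of _ "L -` N"]) auto
qed

lemma code_gauge_linear_pullback:
  fixes L :: "('e::{ab_group_add,topological_space},'k::{field,topological_space}) code \<Rightarrow> ('e,'k) code"
  assumes p: "code_gauge abv sc j p"
    and L: "linear_map (cscale sc) (cscale sc) L" "continuous_on UNIV L" "L ` shape j' \<subseteq> shape j"
  shows "code_gauge abv sc j' (\<lambda>x. p (L x))"
  unfolding code_gauge_def code_zero_eq
proof (intro conjI allI impI ballI)
  fix x :: "('e,'k) code" assume "x \<in> shape j'"
  then show "0 \<le> p (L x)"
    using code_gauge_nonneg[OF p] L(3) by blast
next
  fix t and x :: "('e,'k) code" assume "x \<in> shape j'"
  then show "p (L (cscale sc t x)) = abv t * p (L x)"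
    using p L(3) unfolding code_gauge_def by (auto simp: linear_map_scale[OF L(1)])
next
  fix r :: real assume "r > 0"
  then obtain N where N: "open N" "0 \<in> N" "shape j \<inter> N \<subseteq> {x. p x < r}"
    using p unfolding code_gauge_def code_zero_eq by blast
  moreover have "shape j' \<inter> L -` N \<subseteq> {x. p (L x) < r}"
    using N(3) L(3) by blast
  ultimately show "\<exists>N. open N \<and> 0 \<in> N \<and> shape j' \<inter> N \<subseteq> {x. p (L x) < r}"
    using open_vimage_continuous_on_UNIV[OF L(2) N(1)] linear_map_0[OF L(1)]
    by (intro exI[of _ "L -` N"]) simp
qed

lemma gauge_cproj:
  fixes sc :: "'k::{field,topological_space} \<Rightarrow> 'f::{ab_group_add,topological_space} \<Rightarrow> 'f"
  assumes p: "code_gauge abv sc i p" and "vector_space sc"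
  shows "gauge abv (cscale sc) (\<lambda>z::('f,'k) code. p (cproj i z))"
  unfolding gauge_def
proof (intro conjI allI impI)
  fix x :: "('f,'k) code" show "0 \<le> p (cproj i x)"
    by (rule code_gauge_nonneg[OF p cproj_in_shape])
next
  fix t and x :: "('f,'k) code"
  show "p (cproj i (cscale sc t x)) = abv t * p (cproj i x)"
    using p cproj_in_shape linear_map_scale[OF linear_map_cproj[OF \<open>vector_space sc\<close>]]
    unfolding code_gauge_def by metis
next
  fix r :: real assume "r > 0"
  then obtain N where N: "open N" "0 \<in> N" "shape i \<inter> N \<subseteq> {x. p x < r}"
    using p unfolding code_gauge_def code_zero_eq by blast
  moreover have "cproj i -` N \<subseteq> {x. p (cproj i x) < r}"
    using N(3) cproj_in_shape by blast
  ultimately show "\<exists>N. open N \<and> 0 \<in> N \<and> N \<subseteq> {x::('f,'k) code. p (cproj i x) < r}"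
    using open_vimage_continuous_on_UNIV[OF continuous_on_cproj N(1)]
      linear_map_0[OF linear_map_cproj[OF \<open>vector_space sc\<close>]]
    by (intro exI[of _ "cproj i -` N"]) simp
qed

lemma code_gauge_max:
  fixes p p' :: "('e::{ab_group_add,topological_space},'k::{field,topological_space}) code \<Rightarrow> real"
  assumes vf: "valued_field abv" and p: "code_gauge abv sc j p" and p': "code_gauge abv sc j p'"
  shows "code_gauge abv sc j (\<lambda>x. max (p x) (p' x))"
  unfolding code_gauge_def
proof (intro conjI allI impI ballI)
  fix x :: "('e,'k) code" assume "x \<in> shape j"
  then show "0 \<le> max (p x) (p' x)"
    using code_gauge_nonneg[OF p] by (simp add: le_max_iff_disj)
next
  fix t and x :: "('e,'k) code" assume "x \<in> shape j"
  then show "max (p (cscale sc t x)) (p' (cscale sc t x)) = abv t * max (p x) (p' x)"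
    using p p' abv_nonneg[OF vf, of t] unfolding code_gauge_def by (simp add: max_mult_distrib_left)
next
  fix r :: real assume "r > 0"
  then obtain N N' where "open N" "(\<lambda>_. 0, \<lambda>_. 0) \<in> N" "shape j \<inter> N \<subseteq> {x. p x < r}"
    "open N'" "(\<lambda>_. 0, \<lambda>_. 0) \<in> N'" "shape j \<inter> N' \<subseteq> {x. p' x < r}"
    using p p' unfolding code_gauge_def by meson
  then show "\<exists>N. open N \<and> (\<lambda>_. 0, \<lambda>_. 0) \<in> N \<and> shape j \<inter> N \<subseteq> {x. max (p x) (p' x) < r}"
    by (intro exI[of _ "N \<inter> N'"]) auto
qed

subsection \<open>Minkowski functionals\<close>

lemma open_0_nhds_add_subset:
  fixes N :: "'x::{ab_group_add,topological_space} set"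
  assumes add: "continuous_on UNIV (\<lambda>z::'x \<times> 'x. fst z + snd z)" and "open N" "0 \<in> N"
  obtains P where "open P" "0 \<in> P" "\<And>x y. x \<in> P \<Longrightarrow> y \<in> P \<Longrightarrow> x + y \<in> N"
proof -
  let ?S = "(\<lambda>z::'x \<times> 'x. fst z + snd z) -` N"
  have "open ?S" "(0, 0) \<in> ?S"
    using open_vimage_continuous_on_UNIV[OF add \<open>open N\<close>] \<open>0 \<in> N\<close> by auto
  then obtain A B where "open A" "open B" "(0, 0) \<in> A \<times> B" "A \<times> B \<subseteq> ?S"
    by (rule open_prod_elim)
  then show thesis
    by (intro that[of "A \<inter> B"]) auto
qed

definition balanced :: "('k \<Rightarrow> real) \<Rightarrow> ('k \<Rightarrow> 'x \<Rightarrow> 'x) \<Rightarrow> 'x set \<Rightarrow> bool" where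
  "balanced abv sc B \<longleftrightarrow> (\<forall>\<mu> x. abv \<mu> \<le> 1 \<longrightarrow> x \<in> B \<longrightarrow> sc \<mu> x \<in> B)"

lemma open_balanced_subset:
  fixes abv :: "'k::{field,topological_space} \<Rightarrow> real" and sc :: "'k \<Rightarrow> 'x::{ab_group_add,topological_space} \<Rightarrow> 'x"
  assumes vf: "valued_field abv" and vs: "vector_space sc"
    and scl: "continuous_on UNIV (\<lambda>z::'k \<times> 'x. sc (fst z) (snd z))"
    and "open Q" "0 \<in> Q"
  obtains B where "open B" "0 \<in> B" "B \<subseteq> Q" "balanced abv sc B"
proof -
  note V = vector_space_scale_simps[OF vs]
  let ?S = "(\<lambda>z::'k \<times> 'x. sc (fst z) (snd z)) -` Q"
  have "open ?S" "(0, 0) \<in> ?S"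
    using open_vimage_continuous_on_UNIV[OF scl \<open>open Q\<close>] \<open>0 \<in> Q\<close> V by auto
  then obtain A B' where AB: "open A" "open B'" "(0, 0) \<in> A \<times> B'" "A \<times> B' \<subseteq> ?S"
    by (rule open_prod_elim)
  obtain \<delta> where \<delta>: "\<delta> > 0" "\<forall>l. abv (l - 0) < \<delta> \<longrightarrow> l \<in> A"
    using AB(1,3) open_abv_iff[OF vf] by blast
  define B where "B = (\<Union>l\<in>{l. l \<noteq> 0 \<and> abv l < \<delta>}. sc (inverse l) -` B')"
  have B_iff: "x \<in> B \<longleftrightarrow> (\<exists>l r. l \<noteq> 0 \<and> abv l < \<delta> \<and> r \<in> B' \<and> x = sc l r)" for x
    unfolding B_def using V by (auto intro!: exI[of _ "sc (inverse _) x"])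
  show thesis
  proof
    show "open B"
      unfolding B_def using AB(2) continuous_on_scale_right[OF scl]
      by (intro open_UN ballI open_vimage_continuous_on_UNIV)
    obtain l0 where "l0 \<noteq> 0" "abv l0 < \<delta>"
      using exists_nonzero_abv_less[OF vf \<delta>(1)] by blast
    then show "0 \<in> B"
      unfolding B_iff using AB(3) V by (intro exI[of _ l0] exI[of _ 0]) auto
    show "B \<subseteq> Q"
    proof
      fix x assume "x \<in> B"
      then obtain l r where "abv l < \<delta>" "r \<in> B'" "x = sc l r"
        unfolding B_iff by blast
      moreover from this have "(l, r) \<in> A \<times> B'"
        using \<delta>(2) by auto
      ultimately show "x \<in> Q"
        using AB(4) by auto
    qed
    show "balanced abv sc B"
      unfolding balanced_def
    proof (intro allI impI)
      fix \<mu> x assume \<mu>: "abv \<mu> \<le> 1" and "x \<in> B"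
      then obtain l r where lr: "l \<noteq> 0" "abv l < \<delta>" "r \<in> B'" "x = sc l r"
        unfolding B_iff by blast
      show "sc \<mu> x \<in> B"
      proof (cases "\<mu> = 0")
        case True
        then show ?thesis using \<open>0 \<in> B\<close> V by simp
      next
        case False
        have "abv (\<mu> * l) \<le> abv l"
          using \<mu> abv_nonneg[OF vf, of l] by (simp add: abv_mult[OF vf] mult_left_le_one_le abv_nonneg[OF vf])
        then show ?thesis
          unfolding B_iff using lr False V by (intro exI[of _ "\<mu> * l"] exI[of _ r]) auto
      qed
    qed
  qed
qed

definition minkowski_functional :: "('k::field \<Rightarrow> real) \<Rightarrow> ('k \<Rightarrow> 'x \<Rightarrow> 'x) \<Rightarrow> 'x set \<Rightarrow> 'x \<Rightarrow> real" where
  "minkowski_functional abv sc B x = Inf {abv t | t. t \<noteq> 0 \<and> sc (inverse t) x \<in> B}"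

context
  fixes abv :: "'k::{field,topological_space} \<Rightarrow> real" and sc :: "'k \<Rightarrow> 'x::{ab_group_add,topological_space} \<Rightarrow> 'x"
    and B :: "'x set"
  assumes vf: "valued_field abv" and vs: "vector_space sc"
    and scl: "continuous_on UNIV (\<lambda>z::'k \<times> 'x. sc (fst z) (snd z))"
    and B: "open B" "0 \<in> B" "balanced abv sc B"
begin

private abbreviation "\<mu>B \<equiv> minkowski_functional abv sc B"

lemma balanced_inverse_scale_mono:
  assumes "t \<noteq> 0" "s \<noteq> 0" "abv t \<le> abv s" "sc (inverse t) x \<in> B"
  shows "sc (inverse s) x \<in> B"
proof -
  have "abv s > 0"
    using assms(2) abv_eq_0_iff[OF vf, of s] abv_nonneg[OF vf, of s] by linarith
  moreover have "abv (inverse s * t) = abv t / abv s"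
    by (simp add: abv_mult[OF vf] abv_inverse[OF vf] divide_inverse mult.commute)
  ultimately have "abv (inverse s * t) \<le> 1"
    using assms(3) by simp
  then have "sc (inverse s * t) (sc (inverse t) x) \<in> B"
    using B(3) assms(4) unfolding balanced_def by blast
  moreover have "inverse s * t * inverse t = inverse s"
    using assms(1) by simp
  ultimately show ?thesis
    by (simp only: vector_space_scale_simps(5)[OF vs])
qed

lemma minkowski_functional_set_ne: "{abv t | t. t \<noteq> 0 \<and> sc (inverse t) x \<in> B} \<noteq> {}"
proof -
  have "open ((\<lambda>s. sc s x) -` B)" "0 \<in> (\<lambda>s. sc s x) -` B"
    using open_vimage_continuous_on_UNIV[OF continuous_on_scale_left[OF scl] B(1)] B(2)
    by (auto simp: vector_space_scale_simps[OF vs])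
  then obtain \<epsilon> where "\<epsilon> > 0" "\<forall>s. abv (s - 0) < \<epsilon> \<longrightarrow> s \<in> (\<lambda>s. sc s x) -` B"
    using open_abv_iff[OF vf] by blast
  moreover obtain s where "s \<noteq> 0" "abv s < \<epsilon>"
    using exists_nonzero_abv_less[OF vf \<open>\<epsilon> > 0\<close>] by blast
  ultimately have "abv (inverse s) \<in> {abv t | t. t \<noteq> 0 \<and> sc (inverse t) x \<in> B}"
    by auto
  then show ?thesis by blast
qed

lemma minkowski_functional_le: "t \<noteq> 0 \<Longrightarrow> sc (inverse t) x \<in> B \<Longrightarrow> \<mu>B x \<le> abv t"
  unfolding minkowski_functional_def
  by (rule cInf_lower) (auto intro: bdd_belowI[of _ 0] simp: abv_nonneg[OF vf])

lemma minkowski_functional_nonneg: "0 \<le> \<mu>B x"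
  unfolding minkowski_functional_def
  by (rule cInf_greatest[OF minkowski_functional_set_ne]) (auto simp: abv_nonneg[OF vf])

lemma minkowski_functional_lessE:
  assumes "\<mu>B x < r"
  obtains t where "t \<noteq> 0" "sc (inverse t) x \<in> B" "abv t < r"
  using cInf_lessD[OF minkowski_functional_set_ne assms[unfolded minkowski_functional_def]] that by blast

lemma minkowski_functional_scale_le: "s \<noteq> 0 \<Longrightarrow> \<mu>B (sc s x) \<le> abv s * \<mu>B x"
proof -
  assume "s \<noteq> 0"
  then have s: "abv s > 0"
    using abv_nonneg[OF vf, of s] abv_eq_0_iff[OF vf, of s] by linarith
  have "\<mu>B (sc s x) / abv s \<le> \<mu>B x"
    unfolding minkowski_functional_def[of _ _ _ x]
  proof (rule cInf_greatest[OF minkowski_functional_set_ne], clarify)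
    fix t assume t: "t \<noteq> 0" "sc (inverse t) x \<in> B"
    have "inverse (s * t) * s = inverse t"
      using \<open>s \<noteq> 0\<close> by (simp add: inverse_mult_distrib)
    then have "sc (inverse (s * t)) (sc s x) = sc (inverse t) x"
      by (simp only: vector_space_scale_simps(5)[OF vs])
    then have "\<mu>B (sc s x) \<le> abv s * abv t"
      using minkowski_functional_le[of "s * t"] t \<open>s \<noteq> 0\<close> by (simp add: abv_mult[OF vf])
    then show "\<mu>B (sc s x) / abv s \<le> abv t"
      using s by (simp add: pos_divide_le_eq mult.commute)
  qed
  then show ?thesis
    using s by (simp add: pos_divide_le_eq mult.commute)
qed

lemma minkowski_functional_scale: "\<mu>B (sc s x) = abv s * \<mu>B x"
proof (cases "s = 0")
  case True
  have "\<mu>B 0 \<le> 0"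
  proof (rule ccontr)
    assume "\<not> \<mu>B 0 \<le> 0"
    then have "0 < \<mu>B 0" by simp
    then obtain t where "t \<noteq> 0" "abv t < \<mu>B 0"
      by (rule exists_nonzero_abv_less[OF vf])
    moreover have "\<mu>B 0 \<le> abv t"
      using minkowski_functional_le[OF \<open>t \<noteq> 0\<close>] B(2) by (simp add: vector_space_scale_simps[OF vs])
    ultimately show False by simp
  qed
  then show ?thesis
    using True minkowski_functional_nonneg[of 0] by (simp add: vector_space_scale_simps[OF vs] abv_0[OF vf])
next
  case False
  have "\<mu>B x = \<mu>B (sc (inverse s) (sc s x))"
    using False by (simp add: vector_space_scale_simps[OF vs])
  also have "\<dots> \<le> inverse (abv s) * \<mu>B (sc s x)"
    using minkowski_functional_scale_le[of "inverse s"] False by (simp add: abv_inverse[OF vf])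
  finally have "abv s * \<mu>B x \<le> \<mu>B (sc s x)"
    using False abv_nonneg[OF vf, of s] abv_eq_0_iff[OF vf, of s] by (simp add: field_simps)
  then show ?thesis
    using minkowski_functional_scale_le[OF False, of x] by linarith
qed

lemma gauge_minkowski_functional: "gauge abv sc \<mu>B"
  unfolding gauge_def
proof (intro conjI allI impI)
  fix r :: real assume "r > 0"
  then obtain t where t: "t \<noteq> 0" "abv t < r"
    using exists_nonzero_abv_less[OF vf] by blast
  have "open (sc (inverse t) -` B)" "0 \<in> sc (inverse t) -` B"
    using open_vimage_continuous_on_UNIV[OF continuous_on_scale_right[OF scl] B(1)] B(2)
    by (auto simp: vector_space_scale_simps[OF vs])
  moreover have "sc (inverse t) -` B \<subseteq> {x. \<mu>B x < r}"
    using minkowski_functional_le[OF t(1)] t(2) by fastforce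
  ultimately show "\<exists>N. open N \<and> 0 \<in> N \<and> N \<subseteq> {x. \<mu>B x < r}" by blast
qed (simp_all add: minkowski_functional_nonneg minkowski_functional_scale)

end

lemma gauge_sum3_le_max:
  fixes abv :: "'k::{field,topological_space} \<Rightarrow> real" and sc :: "'k \<Rightarrow> 'x::{ab_group_add,topological_space} \<Rightarrow> 'x"
  assumes vf: "valued_field abv" and vs: "vector_space sc"
    and add: "continuous_on UNIV (\<lambda>z::'x \<times> 'x. fst z + snd z)"
    and scl: "continuous_on UNIV (\<lambda>z::'k \<times> 'x. sc (fst z) (snd z))"
    and q: "gauge abv sc q"
  obtains q' where "gauge abv sc q'" "\<And>u v w. q (u + v + w) \<le> max (q' u) (max (q' v) (q' w))"
proof -
  obtain N where N: "open N" "0 \<in> N" "N \<subseteq> {x. q x < 1}"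
    using q unfolding gauge_def by (meson zero_less_one)
  obtain P where P: "open P" "0 \<in> P" "\<And>x y. x \<in> P \<Longrightarrow> y \<in> P \<Longrightarrow> x + y \<in> N"
    using open_0_nhds_add_subset[OF add N(1,2)] by blast
  obtain Q where Q: "open Q" "0 \<in> Q" "\<And>x y. x \<in> Q \<Longrightarrow> y \<in> Q \<Longrightarrow> x + y \<in> P"
    using open_0_nhds_add_subset[OF add P(1,2)] by blast
  obtain B where B: "open B" "0 \<in> B" "B \<subseteq> Q" "balanced abv sc B"
    using open_balanced_subset[OF vf vs scl Q(1,2)] by blast
  let ?q' = "minkowski_functional abv sc B"
  have "q (u + v + w) \<le> max (?q' u) (max (?q' v) (?q' w))" for u v w
  proof (rule field_le_epsilon)
    fix e :: real assume "e > 0"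
    let ?m = "max (?q' u) (max (?q' v) (?q' w))"
    have "?q' u < ?m + e" "?q' v < ?m + e" "?q' w < ?m + e"
      using \<open>e > 0\<close> by auto
    obtain tu where tu: "tu \<noteq> 0" "sc (inverse tu) u \<in> B" "abv tu < ?m + e"
      using minkowski_functional_lessE[OF vf vs scl B(1,2,4) \<open>?q' u < ?m + e\<close>] by blast
    obtain tv where tv: "tv \<noteq> 0" "sc (inverse tv) v \<in> B" "abv tv < ?m + e"
      using minkowski_functional_lessE[OF vf vs scl B(1,2,4) \<open>?q' v < ?m + e\<close>] by blast
    obtain tw where tw: "tw \<noteq> 0" "sc (inverse tw) w \<in> B" "abv tw < ?m + e"
      using minkowski_functional_lessE[OF vf vs scl B(1,2,4) \<open>?q' w < ?m + e\<close>] by blast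
    define s where "s = (if abv tv \<le> abv tu \<and> abv tw \<le> abv tu then tu else if abv tw \<le> abv tv then tv else tw)"
    have s: "s \<noteq> 0" "abv tu \<le> abv s" "abv tv \<le> abv s" "abv tw \<le> abv s" "abv s < ?m + e"
      unfolding s_def using tu tv tw by auto
    note mono = balanced_inverse_scale_mono[OF vf vs scl B(1,2,4) _ s(1)]
    have "sc (inverse s) u \<in> Q" "sc (inverse s) v \<in> Q" "sc (inverse s) w \<in> Q"
      using mono[OF tu(1) s(2) tu(2)] mono[OF tv(1) s(3) tv(2)] mono[OF tw(1) s(4) tw(2)] B(3) by blast+
    then have "sc (inverse s) u + sc (inverse s) v \<in> P" "sc (inverse s) w + 0 \<in> P"
      using Q(2,3) by blast+
    then have "sc (inverse s) u + sc (inverse s) v + sc (inverse s) w \<in> N"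
      using P(3) by simp
    then have "q (sc (inverse s) (u + v + w)) < 1"
      using N(3) by (auto simp: vector_space_scale_simps[OF vs])
    moreover have "u + v + w = sc s (sc (inverse s) (u + v + w))"
      using s(1) by (simp add: vector_space_scale_simps[OF vs])
    then have "q (u + v + w) = abv s * q (sc (inverse s) (u + v + w))"
      using q unfolding gauge_def by metis
    ultimately have "q (u + v + w) \<le> abv s"
      using abv_nonneg[OF vf, of s] by (simp add: mult_left_le)
    then show "q (u + v + w) \<le> ?m + e"
      using s(5) by simp
  qed
  then show thesis
    using that gauge_minkowski_functional[OF vf vs scl B(1,2,4)] by blast
qed

lemma holder_codeI:
  assumes "\<And>x0 q. x0 \<in> W \<Longrightarrow> gauge abv scF q \<Longrightarrow> \<exists>p N. code_gauge abv scE j p \<and> open N \<and> x0 \<in> N \<and>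
      (\<forall>x\<in>W \<inter> N. \<forall>y\<in>W \<inter> N. q (G y - G x) \<le> p (y - x) powr \<sigma>)"
  shows "holder_code abv scE scF \<sigma> j W G"
  unfolding holder_code_def cdiff_eq
proof (intro ballI allI impI)
  fix x0 q assume "x0 \<in> W" "gauge abv scF q"
  from assms[OF this] show "\<exists>p. code_gauge abv scE j p \<and>
      (\<exists>N. open N \<and> x0 \<in> N \<and> (\<forall>x\<in>W \<inter> N. \<forall>y\<in>W \<inter> N. q (G y - G x) \<le> p (y - x) powr \<sigma>))"
    by blast
qed

lemma holder_codeE:
  assumes "holder_code abv scE scF \<sigma> j W G" "x0 \<in> W" "gauge abv scF q"
  obtains p N where "code_gauge abv scE j p" "open N" "x0 \<in> N"
    "\<And>x y. x \<in> W \<inter> N \<Longrightarrow> y \<in> W \<inter> N \<Longrightarrow> q (G y - G x) \<le> p (y - x) powr \<sigma>"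
  using assms(1)[unfolded holder_code_def cdiff_eq, rule_format, OF assms(2,3)] that by blast

lemma holder_code_linear_post:
  fixes L :: "'f::{ab_group_add,topological_space} \<Rightarrow> 'g::{ab_group_add,topological_space}"
  assumes G: "holder_code abv scE scF \<sigma> j W G" and L: "linear_map scF scG L" "continuous_on UNIV L"
  shows "holder_code abv scE scG \<sigma> j W (\<lambda>x. L (G x))"
proof (rule holder_codeI)
  fix x0 q assume "x0 \<in> W" "gauge abv scG q"
  then have "gauge abv scF (\<lambda>v. q (L v))"
    using gauge_linear_pullback[OF _ L] by blast
  then obtain p N where p: "code_gauge abv scE j p" "open N" "x0 \<in> N"
    "\<And>x y. x \<in> W \<inter> N \<Longrightarrow> y \<in> W \<inter> N \<Longrightarrow> q (L (G y - G x)) \<le> p (y - x) powr \<sigma>"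
    using holder_codeE[OF G \<open>x0 \<in> W\<close>] by blast
  have "\<forall>x\<in>W \<inter> N. \<forall>y\<in>W \<inter> N. q (L (G y) - L (G x)) \<le> p (y - x) powr \<sigma>"
    using p(4) by (simp add: linear_map_diff[OF L(1)])
  with p(1-3) show "\<exists>p N. code_gauge abv scE j p \<and> open N \<and> x0 \<in> N \<and>
      (\<forall>x\<in>W \<inter> N. \<forall>y\<in>W \<inter> N. q (L (G y) - L (G x)) \<le> p (y - x) powr \<sigma>)"
    by blast
qed

definition shape_morphism :: "('k \<Rightarrow> 'e \<Rightarrow> 'e) \<Rightarrow> nat \<Rightarrow> nat
    \<Rightarrow> (('e::{ab_group_add,topological_space},'k::{field,topological_space}) code \<Rightarrow> ('e,'k) code) \<Rightarrow> bool" where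
  "shape_morphism sc j' j L \<longleftrightarrow>
     linear_map (cscale sc) (cscale sc) L \<and> continuous_on UNIV L \<and> L ` shape j' \<subseteq> shape j"

lemma shape_morphism_cleft: "shape_morphism sc (Suc j) j cleft"
  unfolding shape_morphism_def using linear_map_cleft continuous_on_cleft cleft_in_shape by blast

lemma holder_code_linear_pre:
  assumes G: "holder_code abv sE scF \<sigma> j W G" and L: "shape_morphism sE j' j L" "L ` W' \<subseteq> W"
  shows "holder_code abv sE scF \<sigma> j' W' (\<lambda>x. G (L x))"
proof (rule holder_codeI)
  fix x0 q assume "x0 \<in> W'" "gauge abv scF q"
  then obtain p N where p: "code_gauge abv sE j p" "open N" "L x0 \<in> N"
    "\<And>x y. x \<in> W \<inter> N \<Longrightarrow> y \<in> W \<inter> N \<Longrightarrow> q (G y - G x) \<le> p (y - x) powr \<sigma>"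
    using holder_codeE[OF G] L(2) by blast
  have "code_gauge abv sE j' (\<lambda>x. p (L x))"
    using code_gauge_linear_pullback[OF p(1)] L(1) unfolding shape_morphism_def by blast
  moreover have "open (L -` N)"
    using open_vimage_continuous_on_UNIV[OF _ p(2)] L(1) unfolding shape_morphism_def by blast
  moreover have "q (G (L y) - G (L x)) \<le> p (L (y - x)) powr \<sigma>" if "x \<in> W' \<inter> L -` N" "y \<in> W' \<inter> L -` N" for x y
  proof -
    have "L x \<in> W \<inter> N" "L y \<in> W \<inter> N"
      using that L(2) by blast+
    moreover have "linear_map (cscale sE) (cscale sE) L"
      using L(1) unfolding shape_morphism_def by blast
    ultimately show ?thesis
      using p(4) by (simp add: linear_map_diff)
  qed
  ultimately show "\<exists>p N. code_gauge abv sE j' p \<and> open N \<and> x0 \<in> N \<and>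
      (\<forall>x\<in>W' \<inter> N. \<forall>y\<in>W' \<inter> N. q (G (L y) - G (L x)) \<le> p (y - x) powr \<sigma>)"
    using p(3) by blast
qed

text \<open>Where \<open>a = \<bar>l y - l x\<bar> \<le> 1\<close>, the bound \<open>a \<le> a\<^sup>\<sigma>\<close> (this is where \<open>\<sigma> \<le> 1\<close> enters)
  gives \<open>q (l y - l x) = c a \<le> (m a)\<^sup>\<sigma>\<close> with \<open>m\<^sup>\<sigma> = c + 1\<close>.\<close>
lemma holder_code_linear_functional:
  fixes abv :: "'k::{field,topological_space} \<Rightarrow> real" and sE :: "'k \<Rightarrow> 'e::{ab_group_add,topological_space} \<Rightarrow> 'e"
    and l :: "('e,'k) code \<Rightarrow> 'k"
  assumes vf: "valued_field abv" and l: "linear_map (cscale sE) (*) l" "continuous_on UNIV l"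
    and "0 < \<sigma>" "\<sigma> \<le> 1"
  shows "holder_code abv sE (*) \<sigma> j W l"
proof (rule holder_codeI)
  fix x0 q assume "x0 \<in> W" and q: "gauge abv (*) q"
  define c where "c = q 1"
  have q_eq: "q s = abv s * c" for s
    using q unfolding gauge_def c_def by (metis mult.right_neutral)
  have "c \<ge> 0" using q unfolding gauge_def c_def by simp
  define m where "m = (c + 1) powr (1 / \<sigma>)"
  have "m > 0" and m: "m powr \<sigma> = c + 1"
    unfolding m_def using \<open>c \<ge> 0\<close> \<open>0 < \<sigma>\<close> by (simp_all add: powr_powr)
  define p where "p z = m * abv (l z)" for z
  have "code_gauge abv sE j p"
    unfolding code_gauge_def code_zero_eq
  proof (intro conjI allI impI ballI)
    fix x :: "('e,'k) code" show "0 \<le> p x"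
      unfolding p_def using \<open>m > 0\<close> abv_nonneg[OF vf] by simp
  next
    fix t and x :: "('e,'k) code" show "p (cscale sE t x) = abv t * p x"
      unfolding p_def by (simp add: linear_map_scale[OF l(1)] abv_mult[OF vf])
  next
    fix r :: real assume "r > 0"
    let ?N = "l -` {s. abv (s - 0) < r / m}"
    have "open ?N"
      by (rule open_vimage_continuous_on_UNIV[OF l(2) open_abv_ball[OF vf]])
    moreover have "0 \<in> ?N"
      using linear_map_0[OF l(1)] \<open>r > 0\<close> \<open>m > 0\<close> by (simp add: abv_0[OF vf])
    moreover have "shape j \<inter> ?N \<subseteq> {x. p x < r}"
      unfolding p_def using \<open>m > 0\<close> by (auto simp: field_simps)
    ultimately show "\<exists>N. open N \<and> 0 \<in> N \<and> shape j \<inter> N \<subseteq> {x. p x < r}"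
      by blast
  qed
  moreover
  let ?N = "l -` {s. abv (s - l x0) < 1/2}"
  have "open ?N"
    by (rule open_vimage_continuous_on_UNIV[OF l(2) open_abv_ball[OF vf]])
  moreover have "x0 \<in> ?N"
    by (simp add: abv_0[OF vf])
  moreover have "q (l y - l x) \<le> p (y - x) powr \<sigma>" if "x \<in> W \<inter> ?N" "y \<in> W \<inter> ?N" for x y
  proof -
    define a where "a = abv (l y - l x)"
    have "a \<ge> 0" unfolding a_def by (rule abv_nonneg[OF vf])
    have "a \<le> abv (l y - l x0) + abv (l x0 - l x)"
      unfolding a_def by (rule abv_diff_triangle[OF vf])
    then have "a \<le> 1"
      using that abv_minus_commute[OF vf, of "l x0" "l x"] by simp
    have "a \<le> a powr \<sigma>"
    proof (cases "a = 0")
      case False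
      have "a powr 1 \<le> a powr \<sigma>"
        by (rule powr_mono'[OF \<open>\<sigma> \<le> 1\<close> \<open>a \<ge> 0\<close> \<open>a \<le> 1\<close>])
      then show ?thesis using \<open>a \<ge> 0\<close> False by simp
    qed simp
    have "q (l y - l x) = a * c" unfolding a_def by (rule q_eq)
    also have "\<dots> \<le> a powr \<sigma> * (c + 1)"
      using \<open>a \<le> a powr \<sigma>\<close> \<open>c \<ge> 0\<close> by (intro mult_mono) auto
    also have "\<dots> = (m * a) powr \<sigma>"
      using \<open>m > 0\<close> \<open>a \<ge> 0\<close> m by (simp add: powr_mult)
    also have "m * a = p (y - x)"
      unfolding p_def a_def linear_map_diff[OF l(1)] ..
    finally show ?thesis .
  qed
  ultimately show "\<exists>p N. code_gauge abv sE j p \<and> open N \<and> x0 \<in> N \<and>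
      (\<forall>x\<in>W \<inter> N. \<forall>y\<in>W \<inter> N. q (l y - l x) \<le> p (y - x) powr \<sigma>)"
    by blast
qed

text \<open>The gauge p on F^[i] given by the Hoelder condition on \<open>\<Psi>\<close> is extended to all of
  \<open>('f,'k) code\<close> through \<^const>\<open>cproj\<close>, so that the Hoelder condition on \<open>\<Phi>\<close> applies to it.\<close>
lemma holder_code_comp:
  fixes sF :: "'k::{field,topological_space} \<Rightarrow> 'f::{ab_group_add,topological_space} \<Rightarrow> 'f"
    and \<Phi> :: "('e::{ab_group_add,topological_space},'k) code \<Rightarrow> ('f,'k) code" and \<Psi> :: "('f,'k) code \<Rightarrow> 'h::{ab_group_add,topological_space}"
  assumes "vector_space sF" and V: "V \<subseteq> shape i" "\<Phi> ` W \<subseteq> V" and "continuous_on W \<Phi>"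
    and \<Phi>: "holder_code abv sE (cscale sF) \<sigma> j W \<Phi>" and \<Psi>: "holder_code abv sF sH \<tau> i V \<Psi>"
    and "0 < \<tau>"
  shows "holder_code abv sE sH (\<sigma> * \<tau>) j W (\<lambda>x. \<Psi> (\<Phi> x))"
proof (rule holder_codeI)
  fix x0 q assume "x0 \<in> W" "gauge abv sH q"
  then obtain p N where p: "code_gauge abv sF i p" "open N" "\<Phi> x0 \<in> N"
    "\<And>u v. u \<in> V \<inter> N \<Longrightarrow> v \<in> V \<inter> N \<Longrightarrow> q (\<Psi> v - \<Psi> u) \<le> p (v - u) powr \<tau>"
    using holder_codeE[OF \<Psi>] V(2) by blast
  obtain p' N' where p': "code_gauge abv sE j p'" "open N'" "x0 \<in> N'"
    "\<And>x y. x \<in> W \<inter> N' \<Longrightarrow> y \<in> W \<inter> N' \<Longrightarrow> p (cproj i (\<Phi> y - \<Phi> x)) \<le> p' (y - x) powr \<sigma>"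
    using holder_codeE[OF \<Phi> \<open>x0 \<in> W\<close> gauge_cproj[OF p(1) \<open>vector_space sF\<close>]] by blast
  obtain A where A: "open A" "A \<inter> W = \<Phi> -` N \<inter> W"
    using \<open>continuous_on W \<Phi>\<close> p(2) continuous_on_open_invariant by metis
  have "q (\<Psi> (\<Phi> y) - \<Psi> (\<Phi> x)) \<le> p' (y - x) powr (\<sigma> * \<tau>)" if "x \<in> W \<inter> (N' \<inter> A)" "y \<in> W \<inter> (N' \<inter> A)" for x y
  proof -
    have "\<Phi> x \<in> V \<inter> N" "\<Phi> y \<in> V \<inter> N"
      using that A(2) V(2) by blast+
    then have "\<Phi> y - \<Phi> x \<in> shape i"
      using V(1) by (blast intro: shape_diff)
    then have "0 \<le> p (\<Phi> y - \<Phi> x)"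
      by (rule code_gauge_nonneg[OF p(1)])
    have "p (\<Phi> y - \<Phi> x) \<le> p' (y - x) powr \<sigma>"
      using p'(4)[of x y] that cproj_id[OF \<open>\<Phi> y - \<Phi> x \<in> shape i\<close>] by simp
    have "q (\<Psi> (\<Phi> y) - \<Psi> (\<Phi> x)) \<le> p (\<Phi> y - \<Phi> x) powr \<tau>"
      using p(4)[OF \<open>\<Phi> x \<in> V \<inter> N\<close> \<open>\<Phi> y \<in> V \<inter> N\<close>] .
    also have "\<dots> \<le> (p' (y - x) powr \<sigma>) powr \<tau>"
      using \<open>0 < \<tau>\<close> \<open>0 \<le> p (\<Phi> y - \<Phi> x)\<close> \<open>p (\<Phi> y - \<Phi> x) \<le> p' (y - x) powr \<sigma>\<close>
      by (intro powr_mono2) simp_all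
    finally show ?thesis by (simp add: powr_powr)
  qed
  moreover have "open (N' \<inter> A)" "x0 \<in> N' \<inter> A"
    using p'(2,3) A p(3) \<open>x0 \<in> W\<close> by auto
  ultimately show "\<exists>p N. code_gauge abv sE j p \<and> open N \<and> x0 \<in> N \<and>
      (\<forall>x\<in>W \<inter> N. \<forall>y\<in>W \<inter> N. q (\<Psi> (\<Phi> y) - \<Psi> (\<Phi> x)) \<le> p (y - x) powr (\<sigma> * \<tau>))"
    using p'(1) by blast
qed

section \<open>The classes C^{k,\<sigma>}_BGN on coordinate spaces\<close>

definition extends_diff_quot :: "('k::field \<Rightarrow> 'e::ab_group_add \<Rightarrow> 'e) \<Rightarrow> ('k \<Rightarrow> 'f::ab_group_add \<Rightarrow> 'f) \<Rightarrow> nat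
    \<Rightarrow> ('e,'k) code set \<Rightarrow> (('e,'k) code \<Rightarrow> 'f) \<Rightarrow> (('e,'k) code \<Rightarrow> 'f) \<Rightarrow> bool" where
  "extends_diff_quot scE scF j W G G1 \<longleftrightarrow>
     (\<forall>x y t. x \<in> W \<longrightarrow> y \<in> shape j \<longrightarrow> t \<noteq> 0 \<longrightarrow> x + cscale scE t y \<in> W \<longrightarrow>
        G1 (join x y t) = scF (inverse t) (G (x + cscale scE t y) - G x))"

lemma extends_diff_quotD:
  "extends_diff_quot scE scF j W G G1 \<Longrightarrow> x \<in> W \<Longrightarrow> y \<in> shape j \<Longrightarrow> t \<noteq> 0 \<Longrightarrow> x + cscale scE t y \<in> W \<Longrightarrow>
    G1 (join x y t) = scF (inverse t) (G (x + cscale scE t y) - G x)"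
  unfolding extends_diff_quot_def by blast

lemma extends_diff_quot_cadd:
  "extends_diff_quot scE scF j W G G1 \<longleftrightarrow>
    (\<forall>x y t. x \<in> W \<longrightarrow> y \<in> shape j \<longrightarrow> t \<noteq> 0 \<longrightarrow> cadd x (cscale scE t y) \<in> W \<longrightarrow>
       G1 (join x y t) = scF (inverse t) (G (cadd x (cscale scE t y)) - G x))"
  by (simp add: extends_diff_quot_def cadd_eq)

lemma BGN_continuous_on: "BGN abv sE sF \<sigma> k j W G \<Longrightarrow> continuous_on W G"
  by (cases k) simp_all

lemma BGN_holder_code: "BGN abv sE sF \<sigma> k j W G \<Longrightarrow> holder_code abv sE sF \<sigma> j W G"
  by (cases k) simp_all

lemma BGN_Suc_iff:
  "BGN abv sE sF \<sigma> (Suc k) j W G \<longleftrightarrow> continuous_on W G \<and> holder_code abv sE sF \<sigma> j W G \<and>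
     (\<exists>G1. extends_diff_quot sE sF j W G G1 \<and> BGN abv sE sF \<sigma> k (Suc j) (W1 sE j W) G1)"
  unfolding BGN.simps(2) extends_diff_quot_cadd[symmetric] by (blast dest: BGN_continuous_on)

lemma BGN_SucI:
  "continuous_on W G \<Longrightarrow> holder_code abv sE sF \<sigma> j W G \<Longrightarrow> extends_diff_quot sE sF j W G G1 \<Longrightarrow>
    BGN abv sE sF \<sigma> k (Suc j) (W1 sE j W) G1 \<Longrightarrow> BGN abv sE sF \<sigma> (Suc k) j W G"
  unfolding BGN_Suc_iff by blast

lemma BGN_SucE:
  assumes "BGN abv sE sF \<sigma> (Suc k) j W G"
  obtains G1 where "extends_diff_quot sE sF j W G G1" "BGN abv sE sF \<sigma> k (Suc j) (W1 sE j W) G1"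
  using assms unfolding BGN_Suc_iff by blast

lemma BGN_Suc_imp_BGN: "BGN abv sE sF \<sigma> (Suc k) j W G \<Longrightarrow> BGN abv sE sF \<sigma> k j W G"
proof (induction k arbitrary: j W G)
  case (Suc k)
  obtain G1 where "extends_diff_quot sE sF j W G G1" "BGN abv sE sF \<sigma> (Suc k) (Suc j) (W1 sE j W) G1"
    using Suc.prems by (rule BGN_SucE)
  then show ?case
    using Suc.IH BGN_continuous_on[OF Suc.prems] BGN_holder_code[OF Suc.prems] by (blast intro: BGN_SucI)
qed simp

lemma BGN_linear_post:
  fixes L :: "'f::{ab_group_add,topological_space} \<Rightarrow> 'g::{ab_group_add,topological_space}"
  assumes L: "linear_map scF scG L" "continuous_on UNIV L"
  shows "BGN abv sE scF \<sigma> k j W G \<Longrightarrow> BGN abv sE scG \<sigma> k j W (\<lambda>x. L (G x))"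
proof (induction k arbitrary: j W G)
  case 0
  then show ?case
    using holder_code_linear_post[OF _ L] continuous_on_compose2[OF L(2)] by auto
next
  case (Suc k)
  obtain G1 where G1: "extends_diff_quot sE scF j W G G1" "BGN abv sE scF \<sigma> k (Suc j) (W1 sE j W) G1"
    using Suc.prems by (rule BGN_SucE)
  show ?case
  proof (rule BGN_SucI)
    show "continuous_on W (\<lambda>x. L (G x))"
      using continuous_on_compose2[OF L(2) BGN_continuous_on[OF Suc.prems]] by simp
    show "holder_code abv sE scG \<sigma> j W (\<lambda>x. L (G x))"
      by (rule holder_code_linear_post[OF BGN_holder_code[OF Suc.prems] L])
    show "extends_diff_quot sE scG j W (\<lambda>x. L (G x)) (\<lambda>z. L (G1 z))"
      using G1(1) unfolding extends_diff_quot_def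
      by (simp add: linear_map_scale[OF L(1)] linear_map_diff[OF L(1)])
    show "BGN abv sE scG \<sigma> k (Suc j) (W1 sE j W) (\<lambda>z. L (G1 z))"
      by (rule Suc.IH[OF G1(2)])
  qed
qed

definition join_map :: "(('e,'k) code \<Rightarrow> ('e,'k) code) \<Rightarrow> ('e::zero,'k) code \<Rightarrow> ('e,'k) code" where
  "join_map L z = join (L (cleft z)) (L (cright z)) (cscalar z)"

lemma join_map_join [simp]: "join_map L (join x y t) = join (L x) (L y) t"
  unfolding join_map_def by simp

lemma shape_morphism_join_map:
  fixes sE :: "'k::{field,topological_space} \<Rightarrow> 'e::{ab_group_add,topological_space} \<Rightarrow> 'e"
  assumes "vector_space sE" and L: "shape_morphism sE j' j L"
  shows "shape_morphism sE (Suc j') (Suc j) (join_map L)"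
  unfolding shape_morphism_def
proof (intro conjI)
  have lin: "linear_map (cscale sE) (cscale sE) L" and "continuous_on UNIV L" and sh: "L ` shape j' \<subseteq> shape j"
    using L unfolding shape_morphism_def by blast+
  show "linear_map (cscale sE) (cscale sE) (join_map L)"
    unfolding linear_map_def join_map_def
  proof (intro conjI allI)
    fix x y :: "('e,'k) code"
    have "cleft (x + y) = cleft x + cleft y" "cright (x + y) = cright x + cright y"
      by (auto intro!: code_eqI)
    then show "join (L (cleft (x + y))) (L (cright (x + y))) (cscalar (x + y)) =
        join (L (cleft x)) (L (cright x)) (cscalar x) + join (L (cleft y)) (L (cright y)) (cscalar y)"
      by (simp add: linear_map_add[OF lin] join_add[symmetric] cscalar_def)
  next
    fix t and x :: "('e,'k) code"
    have "cleft (cscale sE t x) = cscale sE t (cleft x)" "cright (cscale sE t x) = cscale sE t (cright x)"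
      by (auto intro!: code_eqI)
    then show "join (L (cleft (cscale sE t x))) (L (cright (cscale sE t x))) (cscalar (cscale sE t x)) =
        cscale sE t (join (L (cleft x)) (L (cright x)) (cscalar x))"
      by (simp add: linear_map_scale[OF lin] cscale_join[OF \<open>vector_space sE\<close>] cscalar_def)
  qed
  show "continuous_on UNIV (join_map L)"
    unfolding join_map_def
    by (intro continuous_on_join continuous_on_cscalar
        continuous_on_compose2[OF \<open>continuous_on UNIV L\<close> continuous_on_cleft]
        continuous_on_compose2[OF \<open>continuous_on UNIV L\<close> continuous_on_cright]) auto
  show "join_map L ` shape (Suc j') \<subseteq> shape (Suc j)"
  proof (rule image_subsetI)
    fix z :: "('e,'k) code" assume "z \<in> shape (Suc j')"
    then have "L (cleft z) \<in> shape j" "L (cright z) \<in> shape j"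
      using sh cleft_in_shape cright_in_shape by blast+
    then show "join_map L z \<in> shape (Suc j)"
      unfolding join_map_def by (rule join_in_shape)
  qed
qed

lemma join_map_W1:
  assumes L: "shape_morphism sE j' j L" "L ` W' \<subseteq> W"
  shows "join_map L ` W1 sE j' W' \<subseteq> W1 sE j W"
proof (rule image_subsetI)
  fix z assume "z \<in> W1 sE j' W'"
  then obtain x y t where z: "z = join x y t" "x \<in> W'" "y \<in> shape j'" "x + cscale sE t y \<in> W'"
    unfolding W1_iff by blast
  have "linear_map (cscale sE) (cscale sE) L"
    using L(1) unfolding shape_morphism_def by blast
  then have "L (x + cscale sE t y) = L x + cscale sE t (L y)"
    by (simp add: linear_map_add linear_map_scale)
  then show "join_map L z \<in> W1 sE j W"
    using z L unfolding shape_morphism_def by (auto intro!: join_in_W1)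
qed

lemma BGN_linear_pre:
  assumes "vector_space sE"
  shows "shape_morphism sE j' j L \<Longrightarrow> L ` W' \<subseteq> W \<Longrightarrow> BGN abv sE scF \<sigma> k j W G \<Longrightarrow>
    BGN abv sE scF \<sigma> k j' W' (\<lambda>x. G (L x))"
proof (induction k arbitrary: j j' W W' L G)
  case 0
  have "continuous_on W' L"
    using 0(1) continuous_on_subset unfolding shape_morphism_def by blast
  then have "continuous_on W' (\<lambda>x. G (L x))"
    using continuous_on_compose2[OF BGN_continuous_on[OF 0(3)] _ 0(2)] by blast
  moreover have "holder_code abv sE scF \<sigma> j' W' (\<lambda>x. G (L x))"
    by (rule holder_code_linear_pre[OF BGN_holder_code[OF 0(3)] 0(1,2)])
  ultimately show ?case by simp
next
  case (Suc k)
  obtain G1 where G1: "extends_diff_quot sE scF j W G G1" "BGN abv sE scF \<sigma> k (Suc j) (W1 sE j W) G1"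
    using Suc.prems(3) by (rule BGN_SucE)
  have L: "linear_map (cscale sE) (cscale sE) L" "continuous_on UNIV L" "L ` shape j' \<subseteq> shape j"
    using Suc.prems(1) unfolding shape_morphism_def by blast+
  show ?case
  proof (rule BGN_SucI)
    show "continuous_on W' (\<lambda>x. G (L x))"
      using continuous_on_compose2[OF BGN_continuous_on[OF Suc.prems(3)] continuous_on_subset[OF L(2)] Suc.prems(2)]
      by simp
    show "holder_code abv sE scF \<sigma> j' W' (\<lambda>x. G (L x))"
      by (rule holder_code_linear_pre[OF BGN_holder_code[OF Suc.prems(3)] Suc.prems(1,2)])
    show "extends_diff_quot sE scF j' W' (\<lambda>x. G (L x)) (\<lambda>z. G1 (join_map L z))"
      unfolding extends_diff_quot_def
    proof (intro allI impI)
      fix x y t assume xyt: "x \<in> W'" "y \<in> shape j'" "t \<noteq> 0" "x + cscale sE t y \<in> W'"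
      have L_xty: "L (x + cscale sE t y) = L x + cscale sE t (L y)"
        by (simp add: linear_map_add[OF L(1)] linear_map_scale[OF L(1)])
      have "L x \<in> W" "L y \<in> shape j" "L x + cscale sE t (L y) \<in> W"
        using xyt Suc.prems(2) L(3) unfolding L_xty[symmetric] by blast+
      then show "G1 (join_map L (join x y t)) = scF (inverse t) (G (L (x + cscale sE t y)) - G (L x))"
        using extends_diff_quotD[OF G1(1)] xyt(3) by (simp add: L_xty)
    qed
    show "BGN abv sE scF \<sigma> k (Suc j') (W1 sE j' W') (\<lambda>z. G1 (join_map L z))"
      by (rule Suc.IH[OF shape_morphism_join_map[OF assms Suc.prems(1)] join_map_W1[OF Suc.prems(1,2)] G1(2)])
  qed
qed

text \<open>The difference quotient of a linear functional \<open>l\<close> at \<open>(x, y, t)\<close> is \<open>l y\<close>.\<close>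
lemma BGN_linear_functional:
  fixes abv :: "'k::{field,topological_space} \<Rightarrow> real" and sE :: "'k \<Rightarrow> 'e::{ab_group_add,topological_space} \<Rightarrow> 'e"
  assumes vf: "valued_field abv" and "0 < \<sigma>" "\<sigma> \<le> 1"
  shows "linear_map (cscale sE) (*) (l :: ('e,'k) code \<Rightarrow> 'k) \<Longrightarrow> continuous_on UNIV l \<Longrightarrow> BGN abv sE (*) \<sigma> k j W l"
proof (induction k arbitrary: j W l)
  case 0
  then show ?case
    using holder_code_linear_functional[OF vf 0 assms(2,3)] continuous_on_subset[OF 0(2) subset_UNIV] by simp
next
  case (Suc k)
  show ?case
  proof (rule BGN_SucI)
    show "continuous_on W l"
      using Suc.prems(2) continuous_on_subset by blast
    show "holder_code abv sE (*) \<sigma> j W l"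
      by (rule holder_code_linear_functional[OF vf Suc.prems assms(2,3)])
    show "extends_diff_quot sE (*) j W l (\<lambda>z. l (cright z))"
      unfolding extends_diff_quot_def
      by (simp add: linear_map_add[OF Suc.prems(1)] linear_map_scale[OF Suc.prems(1)])
    show "BGN abv sE (*) \<sigma> k (Suc j) (W1 sE j W) (\<lambda>z. l (cright z))"
      using continuous_on_compose2[OF Suc.prems(2) continuous_on_cright]
      by (intro Suc.IH linear_map_compose[OF linear_map_cright Suc.prems(1)]) simp
  qed
qed

lemma join_diff_split:
  "join a b c - join a' b' c' =
    (join a 0 0 - join a' 0 0) + (join 0 b 0 - join 0 b' 0) + (join 0 0 c - join 0 0 (c' :: 'k::ring) :: ('e::ab_group_add,'k) code)"
  by (rule code_eqI; rule code_list_cases; simp)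

lemma holder_code_join:
  fixes abv :: "'k::{field,topological_space} \<Rightarrow> real" and sE :: "'k \<Rightarrow> 'e::{ab_group_add,topological_space} \<Rightarrow> 'e"
    and sF :: "'k \<Rightarrow> 'f::{ab_group_add,t2_space} \<Rightarrow> 'f"
    and A B :: "('e,'k) code \<Rightarrow> ('f,'k) code" and T :: "('e,'k) code \<Rightarrow> 'k"
  assumes vf: "valued_field abv" and tF: "tvs sF" and "0 < \<sigma>" and "W \<subseteq> shape j"
    and A: "holder_code abv sE (cscale sF) \<sigma> j W A"
    and B: "holder_code abv sE (cscale sF) \<sigma> j W B"
    and T: "holder_code abv sE (*) \<sigma> j W T"
  shows "holder_code abv sE (cscale sF) \<sigma> j W (\<lambda>z. join (A z) (B z) (T z))"
proof (rule holder_codeI)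
  fix x0 q assume "x0 \<in> W" and q: "gauge abv (cscale sF) q"
  have vsF: "vector_space sF" by (rule tvs_vector_space[OF tF])
  obtain q' where q': "gauge abv (cscale sF) q'" "\<And>u v w. q (u + v + w) \<le> max (q' u) (max (q' v) (q' w))"
    using gauge_sum3_le_max[OF vf vector_space_cscale[OF vsF] continuous_on_code_add[OF vf tF]
        continuous_on_cscale[OF vf tF] q] by blast
  have cont: "continuous_on UNIV (\<lambda>a::('f,'k) code. join a 0 (0::'k))"
    "continuous_on UNIV (\<lambda>b::('f,'k) code. join 0 b (0::'k))"
    "continuous_on UNIV (\<lambda>c::'k. join (0::('f,'k) code) 0 c)"
    by (intro continuous_on_join continuous_on_id continuous_on_const)+
  obtain pA NA where pA: "code_gauge abv sE j pA" "open NA" "x0 \<in> NA"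
    "\<And>x y. x \<in> W \<inter> NA \<Longrightarrow> y \<in> W \<inter> NA \<Longrightarrow> q' (join (A y) 0 0 - join (A x) 0 0) \<le> pA (y - x) powr \<sigma>"
    using holder_codeE[OF holder_code_linear_post[OF A linear_map_join_left[OF vsF] cont(1)] \<open>x0 \<in> W\<close> q'(1)]
    by blast
  obtain pB NB where pB: "code_gauge abv sE j pB" "open NB" "x0 \<in> NB"
    "\<And>x y. x \<in> W \<inter> NB \<Longrightarrow> y \<in> W \<inter> NB \<Longrightarrow> q' (join 0 (B y) 0 - join 0 (B x) 0) \<le> pB (y - x) powr \<sigma>"
    using holder_codeE[OF holder_code_linear_post[OF B linear_map_join_right[OF vsF] cont(2)] \<open>x0 \<in> W\<close> q'(1)]
    by blast
  obtain pT NT where pT: "code_gauge abv sE j pT" "open NT" "x0 \<in> NT"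
    "\<And>x y. x \<in> W \<inter> NT \<Longrightarrow> y \<in> W \<inter> NT \<Longrightarrow> q' (join 0 0 (T y) - join 0 0 (T x)) \<le> pT (y - x) powr \<sigma>"
    using holder_codeE[OF holder_code_linear_post[OF T linear_map_join_scalar[OF vsF] cont(3)] \<open>x0 \<in> W\<close> q'(1)]
    by blast
  define p where "p z = max (pA z) (max (pB z) (pT z))" for z
  have "code_gauge abv sE j p"
    unfolding p_def by (intro code_gauge_max[OF vf] pA(1) pB(1) pT(1))
  moreover have "q (join (A y) (B y) (T y) - join (A x) (B x) (T x)) \<le> p (y - x) powr \<sigma>"
    if "x \<in> W \<inter> (NA \<inter> NB \<inter> NT)" "y \<in> W \<inter> (NA \<inter> NB \<inter> NT)" for x y
  proof -
    have "y - x \<in> shape j"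
      using that \<open>W \<subseteq> shape j\<close> by (blast intro: shape_diff)
    then have "0 \<le> pA (y - x)" "0 \<le> pB (y - x)" "0 \<le> pT (y - x)"
      using code_gauge_nonneg[OF pA(1)] code_gauge_nonneg[OF pB(1)] code_gauge_nonneg[OF pT(1)] by simp_all
    have "q (join (A y) (B y) (T y) - join (A x) (B x) (T x)) \<le>
        max (q' (join (A y) 0 0 - join (A x) 0 0))
          (max (q' (join 0 (B y) 0 - join 0 (B x) 0)) (q' (join 0 0 (T y) - join 0 0 (T x))))"
      by (subst join_diff_split) (rule q'(2))
    also have "\<dots> \<le> max (pA (y - x) powr \<sigma>) (max (pB (y - x) powr \<sigma>) (pT (y - x) powr \<sigma>))"
      using pA(4) pB(4) pT(4) that by (intro max.mono) auto
    also have "\<dots> \<le> p (y - x) powr \<sigma>"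
      unfolding p_def using \<open>0 \<le> pA (y - x)\<close> \<open>0 \<le> pB (y - x)\<close> \<open>0 \<le> pT (y - x)\<close> \<open>0 < \<sigma>\<close>
      by (intro max.boundedI powr_mono2) auto
    finally show ?thesis .
  qed
  moreover have "open (NA \<inter> NB \<inter> NT)" "x0 \<in> NA \<inter> NB \<inter> NT"
    using pA(2,3) pB(2,3) pT(2,3) by auto
  ultimately show "\<exists>p N. code_gauge abv sE j p \<and> open N \<and> x0 \<in> N \<and>
      (\<forall>x\<in>W \<inter> N. \<forall>y\<in>W \<inter> N. q (join (A y) (B y) (T y) - join (A x) (B x) (T x)) \<le> p (y - x) powr \<sigma>)"
    by blast
qed

lemma BGN_join:
  fixes abv :: "'k::{field,topological_space} \<Rightarrow> real" and sE :: "'k \<Rightarrow> 'e::{ab_group_add,topological_space} \<Rightarrow> 'e"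
    and sF :: "'k \<Rightarrow> 'f::{ab_group_add,t2_space} \<Rightarrow> 'f"
    and A B :: "('e,'k) code \<Rightarrow> ('f,'k) code" and T :: "('e,'k) code \<Rightarrow> 'k"
  assumes vf: "valued_field abv" and tF: "tvs sF" and "0 < \<sigma>"
  shows "W \<subseteq> shape j \<Longrightarrow> BGN abv sE (cscale sF) \<sigma> k j W A \<Longrightarrow> BGN abv sE (cscale sF) \<sigma> k j W B \<Longrightarrow>
    BGN abv sE (*) \<sigma> k j W T \<Longrightarrow> BGN abv sE (cscale sF) \<sigma> k j W (\<lambda>z. join (A z) (B z) (T z))"
proof (induction k arbitrary: j W A B T)
  case 0
  then show ?case
    using holder_code_join[OF vf tF \<open>0 < \<sigma>\<close>] continuous_on_join by auto
next
  case (Suc k)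
  note prems = Suc.prems(2-4)
  obtain A1 where A1: "extends_diff_quot sE (cscale sF) j W A A1" "BGN abv sE (cscale sF) \<sigma> k (Suc j) (W1 sE j W) A1"
    using Suc.prems(2) by (rule BGN_SucE)
  obtain B1 where B1: "extends_diff_quot sE (cscale sF) j W B B1" "BGN abv sE (cscale sF) \<sigma> k (Suc j) (W1 sE j W) B1"
    using Suc.prems(3) by (rule BGN_SucE)
  obtain T1 where T1: "extends_diff_quot sE (*) j W T T1" "BGN abv sE (*) \<sigma> k (Suc j) (W1 sE j W) T1"
    using Suc.prems(4) by (rule BGN_SucE)
  show ?case
  proof (rule BGN_SucI)
    show "continuous_on W (\<lambda>z. join (A z) (B z) (T z))"
      using BGN_continuous_on[OF prems(1)] BGN_continuous_on[OF prems(2)] BGN_continuous_on[OF prems(3)]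
      by (rule continuous_on_join)
    show "holder_code abv sE (cscale sF) \<sigma> j W (\<lambda>z. join (A z) (B z) (T z))"
      using BGN_holder_code[OF prems(1)] BGN_holder_code[OF prems(2)] BGN_holder_code[OF prems(3)]
      by (rule holder_code_join[OF vf tF \<open>0 < \<sigma>\<close> Suc.prems(1)])
    show "extends_diff_quot sE (cscale sF) j W (\<lambda>z. join (A z) (B z) (T z)) (\<lambda>z. join (A1 z) (B1 z) (T1 z))"
      using A1(1) B1(1) T1(1) unfolding extends_diff_quot_def
      by (simp add: join_diff[symmetric] cscale_join[OF tvs_vector_space[OF tF]])
    show "BGN abv sE (cscale sF) \<sigma> k (Suc j) (W1 sE j W) (\<lambda>z. join (A1 z) (B1 z) (T1 z))"
      by (rule Suc.IH[OF W1_subset_shape[OF Suc.prems(1)] A1(2) B1(2) T1(2)])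
  qed
qed

section \<open>Composition\<close>

text \<open>The chain rule reads \<open>(\<Psi> \<circ> \<Phi>)^[1] = \<Psi>^[1] \<circ> chain_map i \<Phi> \<Phi>^[1]\<close>. The projection \<^const>\<open>cproj\<close>
  only matters at \<open>t = 0\<close>, where the continuous extension \<open>\<Phi>^[1]\<close> is not known to take values in F^[i].\<close>
definition chain_map :: "nat \<Rightarrow> (('e,'k) code \<Rightarrow> ('f,'k) code) \<Rightarrow> (('e,'k) code \<Rightarrow> ('f,'k) code)
    \<Rightarrow> ('e,'k) code \<Rightarrow> ('f::zero,'k::zero) code" where
  "chain_map i \<Phi> \<Phi>1 z = join (\<Phi> (cleft z)) (cproj i (\<Phi>1 z)) (cscalar z)"

context
  fixes sE :: "'k::{field,topological_space} \<Rightarrow> 'e::{ab_group_add,topological_space} \<Rightarrow> 'e"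
    and sF :: "'k \<Rightarrow> 'f::{ab_group_add,topological_space} \<Rightarrow> 'f"
    and \<Phi> \<Phi>1 :: "('e,'k) code \<Rightarrow> ('f,'k) code" and i j :: nat and W V
  assumes vsF: "vector_space sF" and V: "V \<subseteq> shape i" "\<Phi> ` W \<subseteq> V"
    and \<Phi>1: "extends_diff_quot sE (cscale sF) j W \<Phi> \<Phi>1"
begin

lemma extends_diff_quot_increment:
  assumes "x \<in> W" "y \<in> shape j" "t \<noteq> 0" "x + cscale sE t y \<in> W"
  shows "\<Phi>1 (join x y t) \<in> shape i" "\<Phi> x + cscale sF t (\<Phi>1 (join x y t)) = \<Phi> (x + cscale sE t y)"
proof -
  have eq: "\<Phi>1 (join x y t) = cscale sF (inverse t) (\<Phi> (x + cscale sE t y) - \<Phi> x)"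
    by (rule extends_diff_quotD[OF \<Phi>1 assms])
  have "\<Phi> (x + cscale sE t y) - \<Phi> x \<in> shape i"
    using assms V by (blast intro: shape_diff)
  then show "\<Phi>1 (join x y t) \<in> shape i"
    unfolding eq by (rule shape_cscale[OF vsF])
  show "\<Phi> x + cscale sF t (\<Phi>1 (join x y t)) = \<Phi> (x + cscale sE t y)"
    unfolding eq cscale_cscale_inverse[OF vsF \<open>t \<noteq> 0\<close>] by simp
qed

lemma chain_map_join:
  assumes "x \<in> W" "y \<in> shape j" "t \<noteq> 0" "x + cscale sE t y \<in> W"
  shows "chain_map i \<Phi> \<Phi>1 (join x y t) = join (\<Phi> x) (\<Phi>1 (join x y t)) t"
  unfolding chain_map_def using cproj_id[OF extends_diff_quot_increment(1)[OF assms]] by simp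

lemma chain_map_W1: "chain_map i \<Phi> \<Phi>1 ` W1 sE j W \<subseteq> W1 sF i V"
proof (rule image_subsetI)
  fix z assume "z \<in> W1 sE j W"
  then obtain x y t where z: "z = join x y t" "x \<in> W" "y \<in> shape j" "x + cscale sE t y \<in> W"
    unfolding W1_iff by blast
  have "\<Phi> x \<in> V" using z(2) V(2) by blast
  show "chain_map i \<Phi> \<Phi>1 z \<in> W1 sF i V"
  proof (cases "t = 0")
    case True
    then show ?thesis
      unfolding z(1) chain_map_def using \<open>\<Phi> x \<in> V\<close>
      by (auto intro!: join_in_W1 cproj_in_shape simp: cscale_0_left[OF vsF])
  next
    case False
    then show ?thesis
      unfolding z(1) chain_map_join[OF z(2,3) False z(4)]
      using extends_diff_quot_increment[OF z(2,3) False z(4)] \<open>\<Phi> x \<in> V\<close> z(4) V(2) by (auto intro!: join_in_W1)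
  qed
qed

lemma extends_diff_quot_comp:
  assumes "extends_diff_quot sF sH i V \<Psi> \<Psi>1"
  shows "extends_diff_quot sE sH j W (\<lambda>x. \<Psi> (\<Phi> x)) (\<lambda>z. \<Psi>1 (chain_map i \<Phi> \<Phi>1 z))"
  unfolding extends_diff_quot_def
proof (intro allI impI)
  fix x y t assume xyt: "x \<in> W" "y \<in> shape j" "t \<noteq> 0" "x + cscale sE t y \<in> W"
  note step = extends_diff_quot_increment[OF xyt]
  have "\<Phi> x \<in> V" "\<Phi> x + cscale sF t (\<Phi>1 (join x y t)) \<in> V"
    using xyt(1,4) V(2) unfolding step(2) by blast+
  then show "\<Psi>1 (chain_map i \<Phi> \<Phi>1 (join x y t)) = sH (inverse t) (\<Psi> (\<Phi> (x + cscale sE t y)) - \<Psi> (\<Phi> x))"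
    unfolding chain_map_join[OF xyt] step(2)[symmetric]
    by (rule extends_diff_quotD[OF assms _ step(1) xyt(3)])
qed

end

lemma BGN_chain_map:
  fixes abv :: "'k::{field,topological_space} \<Rightarrow> real" and sE :: "'k \<Rightarrow> 'e::{ab_group_add,topological_space} \<Rightarrow> 'e"
    and sF :: "'k \<Rightarrow> 'f::{ab_group_add,t2_space} \<Rightarrow> 'f"
  assumes vf: "valued_field abv" and "vector_space sE" and tF: "tvs sF" and "0 < \<sigma>" "\<sigma> \<le> 1"
    and "W \<subseteq> shape j"
    and \<Phi>: "BGN abv sE (cscale sF) \<sigma> (Suc k) j W \<Phi>"
    and \<Phi>1: "BGN abv sE (cscale sF) \<sigma> k (Suc j) (W1 sE j W) \<Phi>1"
  shows "BGN abv sE (cscale sF) \<sigma> k (Suc j) (W1 sE j W) (chain_map i \<Phi> \<Phi>1)"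
  unfolding chain_map_def
proof (rule BGN_join[OF vf tF \<open>0 < \<sigma>\<close> W1_subset_shape[OF \<open>W \<subseteq> shape j\<close>]])
  show "BGN abv sE (cscale sF) \<sigma> k (Suc j) (W1 sE j W) (\<lambda>z. \<Phi> (cleft z))"
    by (rule BGN_linear_pre[OF \<open>vector_space sE\<close> shape_morphism_cleft cleft_W1 BGN_Suc_imp_BGN[OF \<Phi>]])
  show "BGN abv sE (cscale sF) \<sigma> k (Suc j) (W1 sE j W) (\<lambda>z. cproj i (\<Phi>1 z))"
    by (rule BGN_linear_post[OF linear_map_cproj[OF tvs_vector_space[OF tF]] continuous_on_cproj \<Phi>1])
  show "BGN abv sE (*) \<sigma> k (Suc j) (W1 sE j W) cscalar"
    by (rule BGN_linear_functional[OF vf \<open>0 < \<sigma>\<close> \<open>\<sigma> \<le> 1\<close> linear_map_cscalar continuous_on_cscalar])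
qed

lemma BGN_comp:
  fixes abv :: "'k::{field,topological_space} \<Rightarrow> real" and sE :: "'k \<Rightarrow> 'e::{ab_group_add,topological_space} \<Rightarrow> 'e"
    and sF :: "'k \<Rightarrow> 'f::{ab_group_add,t2_space} \<Rightarrow> 'f"
    and sH :: "'k \<Rightarrow> 'h::{ab_group_add,topological_space} \<Rightarrow> 'h"
    and \<Phi> :: "('e,'k) code \<Rightarrow> ('f,'k) code" and \<Psi> :: "('f,'k) code \<Rightarrow> 'h"
  assumes vf: "valued_field abv" and vsE: "vector_space sE" and tF: "tvs sF"
    and "0 < \<sigma>" "\<sigma> \<le> 1" "0 < \<tau>"
  shows "W \<subseteq> shape j \<Longrightarrow> V \<subseteq> shape i \<Longrightarrow> \<Phi> ` W \<subseteq> V \<Longrightarrow> BGN abv sE (cscale sF) \<sigma> k j W \<Phi> \<Longrightarrow>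
    BGN abv sF sH \<tau> k i V \<Psi> \<Longrightarrow> BGN abv sE sH (\<sigma> * \<tau>) k j W (\<lambda>x. \<Psi> (\<Phi> x))"
proof (induction k arbitrary: j i W V \<Phi> \<Psi>)
  case 0
  have vsF: "vector_space sF" by (rule tvs_vector_space[OF tF])
  show ?case
    using holder_code_comp[OF vsF 0(2,3) BGN_continuous_on[OF 0(4)] BGN_holder_code[OF 0(4)]
        BGN_holder_code[OF 0(5)] \<open>0 < \<tau>\<close>]
      continuous_on_compose2[OF BGN_continuous_on[OF 0(5)] BGN_continuous_on[OF 0(4)] 0(3)]
    by simp
next
  case (Suc k)
  have vsF: "vector_space sF" by (rule tvs_vector_space[OF tF])
  obtain \<Phi>1 where \<Phi>1: "extends_diff_quot sE (cscale sF) j W \<Phi> \<Phi>1"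
      "BGN abv sE (cscale sF) \<sigma> k (Suc j) (W1 sE j W) \<Phi>1"
    using Suc.prems(4) by (rule BGN_SucE)
  obtain \<Psi>1 where \<Psi>1: "extends_diff_quot sF sH i V \<Psi> \<Psi>1" "BGN abv sF sH \<tau> k (Suc i) (W1 sF i V) \<Psi>1"
    using Suc.prems(5) by (rule BGN_SucE)
  note \<Phi>_cont = BGN_continuous_on[OF Suc.prems(4)]
  show ?case
  proof (rule BGN_SucI)
    show "continuous_on W (\<lambda>x. \<Psi> (\<Phi> x))"
      by (rule continuous_on_compose2[OF BGN_continuous_on[OF Suc.prems(5)] \<Phi>_cont Suc.prems(3)])
    show "holder_code abv sE sH (\<sigma> * \<tau>) j W (\<lambda>x. \<Psi> (\<Phi> x))"
      by (rule holder_code_comp[OF vsF Suc.prems(2,3) \<Phi>_cont BGN_holder_code[OF Suc.prems(4)]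
            BGN_holder_code[OF Suc.prems(5)] \<open>0 < \<tau>\<close>])
    show "extends_diff_quot sE sH j W (\<lambda>x. \<Psi> (\<Phi> x)) (\<lambda>z. \<Psi>1 (chain_map i \<Phi> \<Phi>1 z))"
      by (rule extends_diff_quot_comp[OF vsF Suc.prems(2,3) \<Phi>1(1) \<Psi>1(1)])
    show "BGN abv sE sH (\<sigma> * \<tau>) k (Suc j) (W1 sE j W) (\<lambda>z. \<Psi>1 (chain_map i \<Phi> \<Phi>1 z))"
      by (rule Suc.IH[OF W1_subset_shape[OF Suc.prems(1)] W1_subset_shape[OF Suc.prems(2)]
            chain_map_W1[OF vsF Suc.prems(2,3) \<Phi>1(1)]
            BGN_chain_map[OF vf vsE tF \<open>0 < \<sigma>\<close> \<open>\<sigma> \<le> 1\<close> Suc.prems(1,4) \<Phi>1(2)] \<Psi>1(2)])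
  qed
qed

theorem lemma1p33:
  fixes abv :: "'k::{field,topological_space} \<Rightarrow> real"
    and sE :: "'k \<Rightarrow> 'e::{ab_group_add,t2_space} \<Rightarrow> 'e"
    and sF :: "'k \<Rightarrow> 'f::{ab_group_add,t2_space} \<Rightarrow> 'f"
    and sH :: "'k \<Rightarrow> 'h::{ab_group_add,t2_space} \<Rightarrow> 'h"
    and U :: "'e set" and V :: "'f set"
    and f :: "'e \<Rightarrow> 'f" and g :: "'f \<Rightarrow> 'h"
    and k :: nat and \<sigma> \<tau> :: real
  assumes "valued_field abv"
    and "tvs sE" and "tvs sF" and "tvs sH"
    and "U \<subseteq> closure (interior U)" and "V \<subseteq> closure (interior V)"
    and "0 < \<sigma>" and "\<sigma> \<le> 1" and "0 < \<tau>"
    and "f ` U \<subseteq> V"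
    and "Ck_sigma_BGN abv sE sF k \<sigma> U f"
    and "Ck_sigma_BGN abv sF sH k \<tau> V g"
  shows "Ck_sigma_BGN abv sE sH k (\<sigma> * \<tau>) U (g \<circ> f)"
proof -
  let ?U = "lift0 ` U :: ('e,'k) code set" and ?V = "lift0 ` V :: ('f,'k) code set"
  let ?f = "\<lambda>c::('e,'k) code. lift0 (f (fst c [])) :: ('f,'k) code"
  have f: "BGN abv sE (cscale sF) \<sigma> k 0 ?U ?f"
    using BGN_linear_post[OF linear_map_lift0[OF tvs_vector_space[OF \<open>tvs sF\<close>]] continuous_on_lift0]
      \<open>Ck_sigma_BGN abv sE sF k \<sigma> U f\<close> unfolding Ck_sigma_BGN_def by blast
  have g: "BGN abv sF sH \<tau> k 0 ?V (\<lambda>c. g (fst c []))"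
    using \<open>Ck_sigma_BGN abv sF sH k \<tau> V g\<close> unfolding Ck_sigma_BGN_def .
  have "?U \<subseteq> shape 0" "?V \<subseteq> shape 0"
    using lift0_in_shape by blast+
  moreover have "?f ` ?U \<subseteq> ?V"
  proof (rule image_subsetI)
    fix c assume "c \<in> ?U"
    then obtain u where "u \<in> U" "c = lift0 u" by blast
    then have "f (fst c []) \<in> V"
      using \<open>f ` U \<subseteq> V\<close> by (auto simp: lift0_apply_Nil)
    then show "?f c \<in> ?V" by (rule imageI)
  qed
  ultimately have "BGN abv sE sH (\<sigma> * \<tau>) k 0 ?U (\<lambda>c. g (fst (?f c) []))"
    using BGN_comp[OF \<open>valued_field abv\<close> tvs_vector_space[OF \<open>tvs sE\<close>] \<open>tvs sF\<close> \<open>0 < \<sigma>\<close> \<open>\<sigma> \<le> 1\<close> \<open>0 < \<tau>\<close>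
        _ _ _ f g] by blast
  then show ?thesis
    unfolding Ck_sigma_BGN_def by (simp add: lift0_apply_Nil o_def)
qed

end
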